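(* For any parameter $\theta\ne0$, the tests $T^{(1)}_\alpha$ and $T^{(2)}_\alpha$ satisfy, almost surely in $\mathbf X$, $$\mathbb P_\theta\left(T^{(2)}_\alpha>0\,\middle|\,\mathbf X\right)\ge\mathbb P_\theta\left(T^{(1)}_\alpha>0\,\middle|\,\mathbf X\right).$$
   Context: Model: $\mathcal{H}$ separable real Hilbert space; $X$ a centered random element with $\mathbb{E}\|X\|^2<\infty$; $Y=\langle X,\theta\rangle+\epsilon$ with $\epsilon$ centered of variance $\sigma^2>0$ independent of $X$; data $(X_i,Y_i)_{i\le n}$ i.i.d. copies of $(X,Y)$, $\mathbf X=(X_i)$, $\mathbf Y=(Y_i)$; $\mathbb P_\theta$ is probability under slope $\theta$. $\widehat\Gamma_nh=\frac1n\sum_i\langle X_i,h\rangle X_i$ has eigenvalues $\widehat\lambda_1\ge\dots$ and orthonormal eigenfunctions $\widehat V_j$. For an integer $k\ge1$ (all $k$ below are at most $n/2$): $\hat k=k\wedge\mathrm{Rank}(\widehat\Gamma_n)$, $\mathbf W_{ij}=\langle X_i,\widehat V_j\rangle$ ($j\le\hat k$), $\widehat{\boldsymbol\Pi}_k$ orthogonal projection of $\mathbb R^n$ onto the column span of $\mathbf W$, and for $U\in\mathbb R^n$, $\phi_k(U,\mathbf X)=\|\widehat{\boldsymbol\Pi}_kU\|_n^2/(\|U-\widehat{\boldsymbol\Pi}_kU\|_n^2/(n-\hat k))$. $\bar{\mathcal F}_{d_1,d_2}(u)$ is the probability that a Fisher$(d_1,d_2)$ variable exceeds $u$, $\bar{\mathcal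 F}^{-1}_{d_1,d_2}$ its inverse. $\bar k_n$ is a power of 2 with $\bar k_n\le n/2$, $\mathcal K_n=\{1,2,4,\dots,\bar k_n\}$. $T_\alpha=\sup_{k\in\mathcal K_n,\,k\le\mathrm{Rank}(\widehat\Gamma_n)}[\phi_k(\mathbf Y,\mathbf X)-\hat k\,\bar{\mathcal F}^{-1}_{\hat k,n-\hat k}(\alpha_{\mathcal K_n}(\mathbf X))]$, rejecting $H_0$ when $T_\alpha>0$; $T^{(1)}_\alpha$ uses $\alpha_{\mathcal K_n}(\mathbf X)=\alpha/|\mathcal K_n|$ and $T^{(2)}_\alpha$ uses $\alpha_{\mathcal K_n}(\mathbf X)=q_{\mathbf X,\alpha}$, the $\alpha$-quantile of the conditional distribution given $\mathbf X$ of $\inf_{k\in\mathcal K_n}\bar{\mathcal F}_{\hat k,n-\hat k}[\phi_k(\mathbf Z,\mathbf X)/\hat k]$ with $\mathbf Z$ a standard Gaussian vector of $\mathbb R^n$ independent of the data. *)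

theory Defs
  imports "HOL-Probability.Probability"
begin

definition gauss :: "nat \<Rightarrow> (nat \<Rightarrow> real) measure" where
  "gauss d = PiM {..<d} (\<lambda>_. density lborel std_normal_density)"

text \<open>Tail function of the Fisher(d1,d2) law: probability that
  (chi2_d1/d1)/(chi2_d2/d2) exceeds u, chi-squares built from independent Gaussians.\<close>
definition fisher_tail :: "nat \<Rightarrow> nat \<Rightarrow> real \<Rightarrow> real" where
  "fisher_tail d1 d2 u = measure (gauss (d1 + d2))
     {z \<in> space (gauss (d1 + d2)).
        ((\<Sum>i<d1. (z i)\<^sup>2) / real d1) / ((\<Sum>i\<in>{d1..<d1+d2}. (z i)\<^sup>2) / real d2) > u}"

definition fisher_tail_inv :: "nat \<Rightarrow> nat \<Rightarrow> real \<Rightarrow> real" where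
  "fisher_tail_inv d1 d2 a = Inf {u. 0 \<le> u \<and> fisher_tail d1 d2 u \<le> a}"

definition emp_cov :: "nat \<Rightarrow> (nat \<Rightarrow> 'h::real_inner) \<Rightarrow> 'h \<Rightarrow> 'h" where
  "emp_cov n X h = (1 / real n) *\<^sub>R (\<Sum>i<n. (X i \<bullet> h) *\<^sub>R X i)"

text \<open>V_0..V_{r-1} are orthonormal eigenvectors of the empirical covariance with
  nonincreasing positive eigenvalues lam_0 \<ge> ... \<ge> lam_{r-1} > 0 exhausting its range;
  hence r = Rank of the empirical covariance.\<close>
definition is_eigdec :: "nat \<Rightarrow> (nat \<Rightarrow> 'h::real_inner) \<Rightarrow> nat \<Rightarrow> (nat \<Rightarrow> real) \<Rightarrow> (nat \<Rightarrow> 'h) \<Rightarrow> bool" where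
  "is_eigdec n X r lam V \<longleftrightarrow>
     (\<forall>j<r. \<forall>l<r. V j \<bullet> V l = (if j = l then 1 else 0)) \<and>
     (\<forall>j<r. emp_cov n X (V j) = lam j *\<^sub>R V j) \<and>
     (\<forall>j l. j \<le> l \<longrightarrow> l < r \<longrightarrow> lam l \<le> lam j) \<and>
     (\<forall>j<r. 0 < lam j) \<and>
     (\<forall>h. emp_cov n X h \<in> span (V ` {..<r}))"

text \<open>Orthogonal projection of U in R^n onto the span of the columns
  W_{.j} = (<X_i, V_j>)_{i<n}, j < kh.\<close>
definition proj :: "nat \<Rightarrow> (nat \<Rightarrow> 'h::real_inner) \<Rightarrow> (nat \<Rightarrow> 'h) \<Rightarrow> nat \<Rightarrow> (nat \<Rightarrow> real) \<Rightarrow> (nat \<Rightarrow> real)" where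
  "proj n X V kh U = (THE p. (\<exists>c. \<forall>i<n. p i = (\<Sum>j<kh. c j * (X i \<bullet> V j))) \<and>
       (\<forall>j<kh. (\<Sum>i<n. (U i - p i) * (X i \<bullet> V j)) = 0) \<and> (\<forall>i\<ge>n. p i = 0))"

definition normn :: "nat \<Rightarrow> (nat \<Rightarrow> real) \<Rightarrow> real" where
  "normn n U = sqrt ((1 / real n) * (\<Sum>i<n. (U i)\<^sup>2))"

definition phi :: "nat \<Rightarrow> (nat \<Rightarrow> 'h::real_inner) \<Rightarrow> (nat \<Rightarrow> 'h) \<Rightarrow> nat \<Rightarrow> (nat \<Rightarrow> real) \<Rightarrow> real" where
  "phi n X V kh U = (normn n (proj n X V kh U))\<^sup>2 /
      ((normn n (\<lambda>i. U i - proj n X V kh U i))\<^sup>2 / real (n - kh))"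

text \<open>Test statistic T_alpha with level-function value a = alpha_K(X); r = Rank.
  The supremum over the empty set is -\<infinity>.\<close>
definition test_stat :: "nat \<Rightarrow> (nat \<Rightarrow> 'h::real_inner) \<Rightarrow> nat \<Rightarrow> (nat \<Rightarrow> 'h) \<Rightarrow> nat set \<Rightarrow> real \<Rightarrow> (nat \<Rightarrow> real) \<Rightarrow> ereal" where
  "test_stat n X r V K a U = (SUP k\<in>{k\<in>K. k \<le> r}.
     ereal (phi n X V (min k r) U - real (min k r) * fisher_tail_inv (min k r) (n - min k r) a))"

text \<open>q_{X,alpha}: alpha-quantile (generalized inverse of the cdf) of the law of
  inf_{k in K} Fbar_{kh, n-kh}(phi_k(Z,X)/kh), Z standard Gaussian in R^n.\<close>
definition q_quant :: "nat \<Rightarrow> (nat \<Rightarrow> 'h::real_inner) \<Rightarrow> nat \<Rightarrow> (nat \<Rightarrow> 'h) \<Rightarrow> nat set \<Rightarrow> real \<Rightarrow> real" where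
  "q_quant n X r V K \<alpha> = Inf {t. \<alpha> \<le> measure (gauss n)
      {z \<in> space (gauss n). (INF k\<in>K. fisher_tail (min k r) (n - min k r)
                                   (phi n X V (min k r) z / real (min k r))) \<le> t}}"

end

theory Submission
  imports Defs
begin

text \<open>
  Both tests compare the same statistics \<open>\<phi>\<^sub>k(Y,X)\<close> with the thresholds
  \<open>k Fbar\<^sup>-\<^sup>1(a)\<close>, and \<open>Fbar\<^sup>-\<^sup>1\<close> is antitone, so the claim holds pointwise in the noise
  once \<open>q\<^sub>X\<^sub>,\<^sub>\<alpha> \<ge> \<alpha>/|K|\<close>.  That is a Bonferroni bound: an orthogonal change of coordinates
  taking the normalised columns of \<open>W\<close> to the first coordinate vectors preserves the standard
  Gaussian and turns \<open>\<phi>\<^sub>k(Z,X)/k\<close> into an exact Fisher ratio, whose law has no atoms; hence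
  \<open>Fbar(\<phi>\<^sub>k(Z,X)/k)\<close> is stochastically larger than a uniform variable and
  \<open>P(min\<^sub>k Fbar(\<phi>\<^sub>k(Z,X)/k) \<le> t) \<le> |K| t\<close>.  The comparison holds for every noise law.
\<close>

section \<open>Rotations of the standard Gaussian in the plane\<close>

abbreviation std_normal :: "real measure" where
  "std_normal \<equiv> density lborel (\<lambda>x. ennreal (std_normal_density x))"

lemma gauss_eq_PiM_std_normal: "gauss d = PiM {..<d} (\<lambda>_. std_normal)"
  by (simp add: gauss_def)

lemma prob_space_std_normal: "prob_space std_normal"
  using prob_space_normal_density by simp

lemma prob_space_gauss: "prob_space (gauss d)"
  unfolding gauss_eq_PiM_std_normal by (rule prob_space_PiM) (rule prob_space_std_normal)

lemma sets_std_normal [simp]: "sets std_normal = sets borel"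
  by simp

abbreviation measurable2 :: "(real \<Rightarrow> real \<Rightarrow> 'a::topological_space) \<Rightarrow> bool" where
  "measurable2 h \<equiv> (\<lambda>(a, b). h a b) \<in> borel_measurable (lborel \<Otimes>\<^sub>M lborel)"

definition dbl_nn_integral :: "(real \<Rightarrow> real \<Rightarrow> ennreal) \<Rightarrow> ennreal" where
  "dbl_nn_integral h = (\<integral>\<^sup>+b. \<integral>\<^sup>+a. h a b \<partial>lborel \<partial>lborel)"

lemma measurable2_compose:
  assumes h: "measurable2 h" and f: "f \<in> borel_measurable (lborel \<Otimes>\<^sub>M lborel)"
    and g: "g \<in> borel_measurable (lborel \<Otimes>\<^sub>M lborel)"
  shows "measurable2 (\<lambda>a b. h (f (a, b)) (g (a, b)))"
proof -
  have "(\<lambda>x. (f x, g x)) \<in> (lborel \<Otimes>\<^sub>M lborel) \<rightarrow>\<^sub>M (lborel \<Otimes>\<^sub>M lborel)"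
    using f g by (auto intro!: measurable_Pair simp: measurable_lborel1)
  from measurable_comp[OF this h] show ?thesis by (simp add: comp_def case_prod_beta)
qed

lemma measurable2_slice_left:
  assumes "measurable2 h" shows "(\<lambda>a. h a b) \<in> borel_measurable borel"
proof -
  have "(\<lambda>a. (a, b)) \<in> borel \<rightarrow>\<^sub>M (lborel \<Otimes>\<^sub>M lborel)"
    by (auto intro!: measurable_Pair simp: measurable_lborel1)
  from measurable_comp[OF this assms] show ?thesis by (simp add: comp_def)
qed

lemma measurable2_slice_right:
  assumes "measurable2 h" shows "(\<lambda>b. h a b) \<in> borel_measurable borel"
proof -
  have "(\<lambda>b. (a, b)) \<in> borel \<rightarrow>\<^sub>M (lborel \<Otimes>\<^sub>M lborel)"
    by (auto intro!: measurable_Pair simp: measurable_lborel1)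
  from measurable_comp[OF this assms] show ?thesis by (simp add: comp_def)
qed

lemma dbl_nn_integral_swap:
  assumes "measurable2 h"
  shows "dbl_nn_integral h = (\<integral>\<^sup>+a. \<integral>\<^sup>+b. h a b \<partial>lborel \<partial>lborel)"
  unfolding dbl_nn_integral_def using lborel_pair.Fubini'[OF assms] by simp

lemma dbl_nn_integral_shear_left:
  assumes h: "measurable2 h"
  shows "dbl_nn_integral (\<lambda>a b. h (a + t * b) b) = dbl_nn_integral h"
  unfolding dbl_nn_integral_def
proof (rule nn_integral_cong)
  fix b :: real
  show "(\<integral>\<^sup>+a. h (a + t * b) b \<partial>lborel) = (\<integral>\<^sup>+a. h a b \<partial>lborel)"
    using nn_integral_real_affine[OF measurable2_slice_left[OF h, of b], of 1 "t * b"]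
    by (simp add: add.commute)
qed

lemma dbl_nn_integral_shear_right:
  assumes h: "measurable2 h"
  shows "dbl_nn_integral (\<lambda>a b. h a (b + t * a)) = dbl_nn_integral h"
proof -
  have h': "measurable2 (\<lambda>a b. h a (b + t * a))"
    using measurable2_compose[OF h, of fst "\<lambda>(a, b). b + t * a"] by (simp add: case_prod_beta)
  have "dbl_nn_integral (\<lambda>a b. h a (b + t * a)) = (\<integral>\<^sup>+a. \<integral>\<^sup>+b. h a (b + t * a) \<partial>lborel \<partial>lborel)"
    by (rule dbl_nn_integral_swap[OF h'])
  also have "\<dots> = (\<integral>\<^sup>+a. \<integral>\<^sup>+b. h a b \<partial>lborel \<partial>lborel)"
  proof (rule nn_integral_cong)
    fix a :: real
    show "(\<integral>\<^sup>+b. h a (b + t * a) \<partial>lborel) = (\<integral>\<^sup>+b. h a b \<partial>lborel)"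
      using nn_integral_real_affine[OF measurable2_slice_right[OF h, of a], of 1 "t * a"]
      by (simp add: add.commute)
  qed
  also have "\<dots> = dbl_nn_integral h"
    using dbl_nn_integral_swap[OF h] by simp
  finally show ?thesis .
qed

text \<open>A rotation by an angle \<open>\<omega> \<noteq> \<pi>\<close> is the product of three shears with parameters
  \<open>-tan(\<omega>/2)\<close>, \<open>sin \<omega>\<close>, \<open>-tan(\<omega>/2)\<close>, and each shear preserves Lebesgue measure.\<close>

lemma rotation_eq_shears:
  fixes c s a b :: real
  assumes cs: "c\<^sup>2 + s\<^sup>2 = 1" and c: "c \<noteq> -1"
  defines "t \<equiv> s / (1 + c)"
  shows "c * a - s * b = a + - t * b + - t * (b + s * (a + - t * b))"
    and "s * a + c * b = b + s * (a + - t * b)"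
proof -
  have c': "1 + c \<noteq> 0" using c by auto
  have "s * t = s\<^sup>2 / (1 + c)" by (simp add: t_def power2_eq_square)
  also have "\<dots> = (1 - c) * (1 + c) / (1 + c)"
    using cs by (simp add: algebra_simps power2_eq_square)
  finally have st: "s * t = 1 - c" using c' by simp
  have t: "t * (1 + c) = s" using c' by (simp add: t_def)
  have "a + - t * b + - t * (b + s * (a + - t * b)) = a * (1 - s * t) - b * (t * (2 - s * t))"
    by (simp add: algebra_simps)
  then show "c * a - s * b = a + - t * b + - t * (b + s * (a + - t * b))"
    using st t by (simp add: add.commute)
  have "b + s * (a + - t * b) = s * a + b * (1 - s * t)" by (simp add: algebra_simps)
  then show "s * a + c * b = b + s * (a + - t * b)" using st by simp
qed

lemma dbl_nn_integral_rotation: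
  fixes c s :: real
  assumes h: "measurable2 h" and cs: "c\<^sup>2 + s\<^sup>2 = 1" and c: "c \<noteq> -1"
  shows "dbl_nn_integral (\<lambda>a b. h (c * a - s * b) (s * a + c * b)) = dbl_nn_integral h"
proof -
  define t where "t = s / (1 + c)"
  define h1 where "h1 a b = h (a + (-t) * b) b" for a b
  define h2 where "h2 a b = h1 a (b + s * a)" for a b
  have m1: "measurable2 h1" unfolding h1_def
    using measurable2_compose[OF h, of "\<lambda>(a, b). a + (-t) * b" snd] by (simp add: case_prod_beta)
  have m2: "measurable2 h2" unfolding h2_def
    using measurable2_compose[OF m1, of fst "\<lambda>(a, b). b + s * a"] by (simp add: case_prod_beta)
  have "(\<lambda>a b. h (c * a - s * b) (s * a + c * b)) = (\<lambda>a b. h2 (a + (-t) * b) b)"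
    by (simp only: h1_def h2_def t_def rotation_eq_shears[OF cs c])
  then have "dbl_nn_integral (\<lambda>a b. h (c * a - s * b) (s * a + c * b))
      = dbl_nn_integral (\<lambda>a b. h2 (a + (-t) * b) b)"
    by (rule arg_cong)
  also have "\<dots> = dbl_nn_integral h2"
    by (rule dbl_nn_integral_shear_left[OF m2])
  also have "\<dots> = dbl_nn_integral h1"
    unfolding h2_def by (rule dbl_nn_integral_shear_right[OF m1])
  also have "\<dots> = dbl_nn_integral h"
    unfolding h1_def by (rule dbl_nn_integral_shear_left[OF h])
  finally show ?thesis .
qed

lemma std_normal_density_rotation:
  fixes c s a b :: real
  assumes cs: "c\<^sup>2 + s\<^sup>2 = 1"
  shows "std_normal_density (c * a - s * b) * std_normal_density (s * a + c * b)
       = std_normal_density a * std_normal_density b"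
proof -
  have sq: "(c * a - s * b)\<^sup>2 + (s * a + c * b)\<^sup>2 = a\<^sup>2 + b\<^sup>2"
  proof -
    have "(c * a - s * b)\<^sup>2 + (s * a + c * b)\<^sup>2 = (c\<^sup>2 + s\<^sup>2) * (a\<^sup>2 + b\<^sup>2)"
      by (simp add: power2_eq_square algebra_simps)
    thus ?thesis using cs by simp
  qed
  have "\<And>x y::real. std_normal_density x * std_normal_density y
      = (1 / sqrt (2 * pi))\<^sup>2 * exp (- (x\<^sup>2 + y\<^sup>2) / 2)"
    by (simp add: std_normal_density_def power2_eq_square exp_add[symmetric] field_simps)
  thus ?thesis using sq by metis
qed

lemma measurable2_nn_integral_std_normal:
  assumes g: "measurable2 g"
  shows "(\<lambda>b. \<integral>\<^sup>+a. g a b \<partial>std_normal) \<in> borel_measurable borel"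
proof -
  interpret prob_space std_normal by (rule prob_space_std_normal)
  have g': "(\<lambda>(x, y). g x y) \<in> borel_measurable (std_normal \<Otimes>\<^sub>M borel)"
    using g by (simp add: measurable_cong_sets[OF sets_pair_measure_cong[of std_normal lborel borel lborel]])
  have e: "(\<lambda>(b, a). g a b) = (\<lambda>(x, y). g x y) \<circ> (\<lambda>(x, y). (y, x))" by (auto simp: fun_eq_iff)
  have "(\<lambda>(b, a). g a b) \<in> borel_measurable (borel \<Otimes>\<^sub>M std_normal)"
    unfolding e by (rule measurable_comp[OF measurable_pair_swap' g'])
  from borel_measurable_nn_integral[of "\<lambda>b a. g a b", OF this] show ?thesis by simp
qed

lemma nn_integral_std_normal_pair:
  assumes g: "measurable2 g"
  shows "(\<integral>\<^sup>+b. \<integral>\<^sup>+a. g a b \<partial>std_normal \<partial>std_normal)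
       = dbl_nn_integral (\<lambda>a b. ennreal (std_normal_density a * std_normal_density b) * g a b)"
proof -
  have "(\<integral>\<^sup>+b. \<integral>\<^sup>+a. g a b \<partial>std_normal \<partial>std_normal)
      = (\<integral>\<^sup>+b. ennreal (std_normal_density b) * (\<integral>\<^sup>+a. g a b \<partial>std_normal) \<partial>lborel)"
    using measurable2_nn_integral_std_normal[OF g] by (intro nn_integral_density) auto
  also have "\<dots> = (\<integral>\<^sup>+b. ennreal (std_normal_density b)
                     * (\<integral>\<^sup>+a. ennreal (std_normal_density a) * g a b \<partial>lborel) \<partial>lborel)"
    using measurable2_slice_left[OF g]
    by (intro nn_integral_cong arg_cong2[where f="(*)"] refl nn_integral_density) auto
  also have "\<dots> = dbl_nn_integral (\<lambda>a b. ennreal (std_normal_density a * std_normal_density b) * g a b)"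
    unfolding dbl_nn_integral_def
  proof (intro nn_integral_cong)
    fix b
    have "(\<lambda>a. ennreal (std_normal_density a) * g a b) \<in> borel_measurable lborel"
      using measurable2_slice_left[OF g] by simp
    from nn_integral_cmult[OF this, of "ennreal (std_normal_density b)"]
    show "ennreal (std_normal_density b) * (\<integral>\<^sup>+a. ennreal (std_normal_density a) * g a b \<partial>lborel)
        = (\<integral>\<^sup>+a. ennreal (std_normal_density a * std_normal_density b) * g a b \<partial>lborel)"
      by (simp add: mult.assoc mult.left_commute ennreal_mult'')
  qed
  finally show ?thesis .
qed

lemma std_normal_pair_rotation:
  fixes c s :: real
  assumes h: "measurable2 h" and cs: "c\<^sup>2 + s\<^sup>2 = 1" and c: "c \<noteq> -1"
  shows "(\<integral>\<^sup>+b. \<integral>\<^sup>+a. h (c * a - s * b) (s * a + c * b) \<partial>std_normal \<partial>std_normal)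
       = (\<integral>\<^sup>+b. \<integral>\<^sup>+a. h a b \<partial>std_normal \<partial>std_normal)"
proof -
  define H where "H a b = ennreal (std_normal_density a * std_normal_density b) * h a b" for a b
  have mH: "measurable2 H" unfolding H_def using h by (simp add: case_prod_beta) measurable
  have mR: "measurable2 (\<lambda>a b. h (c * a - s * b) (s * a + c * b))"
    using measurable2_compose[OF h, of "\<lambda>(a, b). c * a - s * b" "\<lambda>(a, b). s * a + c * b"]
    by (simp add: case_prod_beta)
  have "(\<integral>\<^sup>+b. \<integral>\<^sup>+a. h (c * a - s * b) (s * a + c * b) \<partial>std_normal \<partial>std_normal)
      = dbl_nn_integral (\<lambda>a b. H (c * a - s * b) (s * a + c * b))"
    unfolding nn_integral_std_normal_pair[OF mR] H_def std_normal_density_rotation[OF cs] ..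
  also have "\<dots> = dbl_nn_integral H" by (rule dbl_nn_integral_rotation[OF mH cs c])
  also have "\<dots> = (\<integral>\<^sup>+b. \<integral>\<^sup>+a. h a b \<partial>std_normal \<partial>std_normal)"
    unfolding nn_integral_std_normal_pair[OF h] H_def ..
  finally show ?thesis .
qed


section \<open>Orthogonal invariance of the standard Gaussian vector\<close>

interpretation std_normal_product: product_sigma_finite "\<lambda>_::nat. std_normal"
  unfolding product_sigma_finite_def
  using prob_space_std_normal prob_space_imp_sigma_finite by blast

lemma space_gauss: "space (gauss n) = {z. \<forall>k. n \<le> k \<longrightarrow> z k = undefined}"
  by (auto simp: gauss_eq_PiM_std_normal space_PiM PiE_def extensional_def)

lemma measurable_coordinate_gauss: "j < n \<Longrightarrow> (\<lambda>z. z j) \<in> borel_measurable (gauss n)"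
  using measurable_component_singleton[of j "{..<n}" "\<lambda>_::nat. std_normal"]
  by (simp add: gauss_eq_PiM_std_normal measurable_cong_sets[OF refl sets_std_normal])

lemma measurable_sum_squares_gauss:
  assumes "\<And>i. i \<in> I \<Longrightarrow> i < n"
  shows "(\<lambda>z. \<Sum>i\<in>I. (z i)\<^sup>2) \<in> borel_measurable (gauss n)"
  by (rule borel_measurable_sum) (use measurable_coordinate_gauss assms in auto)

lemma measurable_fun_upd_PiM:
  assumes "i \<notin> I"
  shows "(\<lambda>(x, a). x(i := a)) \<in> (PiM I (\<lambda>_::nat. std_normal) \<Otimes>\<^sub>M std_normal) \<rightarrow>\<^sub>M PiM (insert i I) (\<lambda>_. std_normal)"
proof -
  have "(\<lambda>\<omega> k. if k = i then snd \<omega> else fst \<omega> k)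
      \<in> (PiM I (\<lambda>_::nat. std_normal) \<Otimes>\<^sub>M std_normal) \<rightarrow>\<^sub>M PiM (insert i I) (\<lambda>_. std_normal)"
  proof (rule measurable_PiM_single')
    fix k assume "k \<in> insert i I"
    then show "(\<lambda>\<omega>. if k = i then snd \<omega> else fst \<omega> k)
        \<in> (PiM I (\<lambda>_::nat. std_normal) \<Otimes>\<^sub>M std_normal) \<rightarrow>\<^sub>M std_normal"
      by (cases "k = i") auto
  next
    show "(\<lambda>\<omega> k. if k = i then snd \<omega> else fst \<omega> k)
        \<in> space (PiM I (\<lambda>_. std_normal) \<Otimes>\<^sub>M std_normal) \<rightarrow> (\<Pi>\<^sub>E k\<in>insert i I. space std_normal)"
      using assms by (auto simp: space_pair_measure space_PiM PiE_iff extensional_def split: if_splits)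
  qed
  moreover have "(\<lambda>\<omega> k. if k = i then snd \<omega> else fst \<omega> k) = (\<lambda>(x, a). x(i := a))"
    by (auto simp: fun_eq_iff)
  ultimately show ?thesis by simp
qed

lemma measurable_fun_upd2:
  assumes x: "x \<in> space (PiM J (\<lambda>_::nat. std_normal))" and "i \<notin> J" "l \<notin> J" "i \<noteq> l"
  shows "(\<lambda>(a, b). x(l := b, i := a)) \<in> (lborel \<Otimes>\<^sub>M lborel) \<rightarrow>\<^sub>M PiM (insert i (insert l J)) (\<lambda>_. std_normal)"
proof -
  have "(\<lambda>\<omega> k. if k = i then fst \<omega> else if k = l then snd \<omega> else x k)
      \<in> (lborel \<Otimes>\<^sub>M lborel) \<rightarrow>\<^sub>M PiM (insert i (insert l J)) (\<lambda>_. std_normal)"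
  proof (rule measurable_PiM_single')
    fix k
    show "(\<lambda>\<omega>. if k = i then fst \<omega> else if k = l then snd \<omega> else x k) \<in> (lborel \<Otimes>\<^sub>M lborel) \<rightarrow>\<^sub>M std_normal"
      by (cases "k = i"; cases "k = l") (auto simp: measurable_lborel1)
  next
    show "(\<lambda>\<omega> k. if k = i then fst \<omega> else if k = l then snd \<omega> else x k)
        \<in> space (lborel \<Otimes>\<^sub>M lborel) \<rightarrow> (\<Pi>\<^sub>E k\<in>insert i (insert l J). space std_normal)"
      using assms x by (auto simp: space_pair_measure space_PiM PiE_iff extensional_def split: if_splits)
  qed
  moreover have "(\<lambda>\<omega> k. if k = i then fst \<omega> else if k = l then snd \<omega> else x k) = (\<lambda>(a, b). x(l := b, i := a))"
    by (auto simp: fun_eq_iff)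
  ultimately show ?thesis by simp
qed

lemma nn_integral_PiM_std_normal_split2:
  assumes K: "finite K" "i \<in> K" "l \<in> K" "i \<noteq> l"
    and F: "F \<in> borel_measurable (PiM K (\<lambda>_::nat. std_normal))"
  shows "integral\<^sup>N (PiM K (\<lambda>_. std_normal)) F =
    (\<integral>\<^sup>+x. \<integral>\<^sup>+b. \<integral>\<^sup>+a. F (x(l := b, i := a)) \<partial>std_normal \<partial>std_normal \<partial>PiM (K - {i, l}) (\<lambda>_. std_normal))"
proof -
  define J where "J = K - {i, l}"
  have KJ: "K = insert i (insert l J)" using K by (auto simp: J_def)
  have J: "finite J" "i \<notin> insert l J" "l \<notin> J" using K by (auto simp: J_def)
  have F': "F \<in> borel_measurable (PiM (insert i (insert l J)) (\<lambda>_::nat. std_normal))"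
    using F KJ by simp
  have Fi: "(\<lambda>x. \<integral>\<^sup>+a. F (x(i := a)) \<partial>std_normal) \<in> borel_measurable (PiM (insert l J) (\<lambda>_. std_normal))"
  proof -
    have "(\<lambda>(x, a). F (x(i := a))) = F \<circ> (\<lambda>(x, a). x(i := a))" by (auto simp: fun_eq_iff)
    then have "(\<lambda>(x, a). F (x(i := a))) \<in> borel_measurable (PiM (insert l J) (\<lambda>_. std_normal) \<Otimes>\<^sub>M std_normal)"
      using measurable_comp[OF measurable_fun_upd_PiM[OF J(2)] F'] by simp
    from std_normal_product.borel_measurable_nn_integral[OF this] show ?thesis .
  qed
  have "integral\<^sup>N (PiM (insert i (insert l J)) (\<lambda>_. std_normal)) F
      = (\<integral>\<^sup>+x. \<integral>\<^sup>+a. F (x(i := a)) \<partial>std_normal \<partial>PiM (insert l J) (\<lambda>_. std_normal))"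
    by (rule std_normal_product.product_nn_integral_insert[OF _ J(2) F']) (use J in simp)
  also have "\<dots> = (\<integral>\<^sup>+x. \<integral>\<^sup>+b. \<integral>\<^sup>+a. F (x(l := b, i := a)) \<partial>std_normal \<partial>std_normal \<partial>PiM J (\<lambda>_. std_normal))"
    by (rule std_normal_product.product_nn_integral_insert[OF J(1) J(3) Fi])
  finally show ?thesis unfolding KJ[symmetric] by (simp only: J_def)
qed

lemma distr_eq_self_if_nn_integral_invariant:
  assumes G: "G \<in> M \<rightarrow>\<^sub>M M"
    and inv: "\<And>F. F \<in> borel_measurable M \<Longrightarrow> (\<integral>\<^sup>+x. F (G x) \<partial>M) = integral\<^sup>N M F"
  shows "distr M M G = M"
proof (rule measure_eqI)
  fix A assume "A \<in> sets (distr M M G)"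
  hence A: "A \<in> sets M" by simp
  have "emeasure (distr M M G) A = emeasure M (G -` A \<inter> space M)"
    by (rule emeasure_distr[OF G A])
  also have "\<dots> = (\<integral>\<^sup>+x. indicator (G -` A \<inter> space M) x \<partial>M)"
    using measurable_sets[OF G A] by simp
  also have "\<dots> = (\<integral>\<^sup>+x. indicator A (G x) \<partial>M)"
    by (intro nn_integral_cong) (auto simp: indicator_def)
  also have "\<dots> = emeasure M A" using A by (simp add: inv)
  finally show "emeasure (distr M M G) A = emeasure M A" .
qed simp

text \<open>Restricting to \<open>{..<n}\<close> keeps the maps inside \<open>space (gauss n)\<close>, whose points are
  \<open>undefined\<close> from coordinate \<open>n\<close> on.\<close>

definition givens :: "nat \<Rightarrow> nat \<Rightarrow> nat \<Rightarrow> real \<Rightarrow> real \<Rightarrow> (nat \<Rightarrow> real) \<Rightarrow> (nat \<Rightarrow> real)" where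
  "givens n i l c s z = (\<lambda>k\<in>{..<n}. if k = i then c * z i - s * z l
                                      else if k = l then s * z i + c * z l else z k)"

definition reflect :: "nat \<Rightarrow> nat \<Rightarrow> (nat \<Rightarrow> real) \<Rightarrow> (nat \<Rightarrow> real)" where
  "reflect n i z = (\<lambda>k\<in>{..<n}. if k = i then - z i else z k)"

lemma measurable_givens: "i < n \<Longrightarrow> l < n \<Longrightarrow> givens n i l c s \<in> gauss n \<rightarrow>\<^sub>M gauss n"
  unfolding givens_def gauss_eq_PiM_std_normal
  by (intro measurable_restrict) (simp add: measurable_cong_sets[OF refl sets_std_normal])

lemma measurable_reflect: "i < n \<Longrightarrow> reflect n i \<in> gauss n \<rightarrow>\<^sub>M gauss n"
  unfolding reflect_def gauss_eq_PiM_std_normal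
  by (intro measurable_restrict) (simp add: measurable_cong_sets[OF refl sets_std_normal])

lemma nn_integral_givens:
  assumes il: "i < n" "l < n" "i \<noteq> l" and cs: "c\<^sup>2 + s\<^sup>2 = 1" "c \<noteq> -1"
    and F: "F \<in> borel_measurable (gauss n)"
  shows "(\<integral>\<^sup>+z. F (givens n i l c s z) \<partial>gauss n) = integral\<^sup>N (gauss n) F"
proof -
  define J where "J = {..<n} - {i, l}"
  have K: "finite {..<n}" "i \<in> {..<n}" "l \<in> {..<n}" "i \<noteq> l" using il by auto
  have KJ: "insert i (insert l J) = {..<n}" using il by (auto simp: J_def)
  have F': "F \<in> borel_measurable (PiM {..<n} (\<lambda>_::nat. std_normal))"
    using F by (simp add: gauss_eq_PiM_std_normal)
  have FG: "(\<lambda>z. F (givens n i l c s z)) \<in> borel_measurable (PiM {..<n} (\<lambda>_::nat. std_normal))"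
    using measurable_comp[OF measurable_givens[OF il(1,2)] F] by (simp add: comp_def gauss_eq_PiM_std_normal)
  have "(\<integral>\<^sup>+z. F (givens n i l c s z) \<partial>gauss n)
      = (\<integral>\<^sup>+x. \<integral>\<^sup>+b. \<integral>\<^sup>+a. F (givens n i l c s (x(l := b, i := a))) \<partial>std_normal \<partial>std_normal \<partial>PiM J (\<lambda>_. std_normal))"
    unfolding gauss_eq_PiM_std_normal J_def by (rule nn_integral_PiM_std_normal_split2[OF K FG])
  also have "\<dots> = (\<integral>\<^sup>+x. \<integral>\<^sup>+b. \<integral>\<^sup>+a. F (x(l := b, i := a)) \<partial>std_normal \<partial>std_normal \<partial>PiM J (\<lambda>_. std_normal))"
  proof (rule nn_integral_cong)
    fix x assume x: "x \<in> space (PiM J (\<lambda>_::nat. std_normal))"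
    have "(\<lambda>(a, b). x(l := b, i := a)) \<in> (lborel \<Otimes>\<^sub>M lborel) \<rightarrow>\<^sub>M PiM {..<n} (\<lambda>_. std_normal)"
      using measurable_fun_upd2[OF x, of i l] il unfolding KJ by (simp add: J_def)
    from measurable_comp[OF this F'] have h: "measurable2 (\<lambda>a b. F (x(l := b, i := a)))"
      by (simp add: comp_def case_prod_beta')
    have "x k = undefined" if "k \<notin> J" for k
      using x that by (auto simp: space_PiM PiE_def extensional_def)
    then have "givens n i l c s (x(l := b, i := a)) = x(l := s * a + c * b, i := c * a - s * b)" for a b
      unfolding givens_def using il by (auto simp: fun_eq_iff J_def)
    then show "(\<integral>\<^sup>+b. \<integral>\<^sup>+a. F (givens n i l c s (x(l := b, i := a))) \<partial>std_normal \<partial>std_normal)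
        = (\<integral>\<^sup>+b. \<integral>\<^sup>+a. F (x(l := b, i := a)) \<partial>std_normal \<partial>std_normal)"
      using std_normal_pair_rotation[OF h cs] by simp
  qed
  also have "\<dots> = integral\<^sup>N (gauss n) F"
    unfolding gauss_eq_PiM_std_normal J_def by (rule nn_integral_PiM_std_normal_split2[OF K F', symmetric])
  finally show ?thesis .
qed

lemma nn_integral_std_normal_uminus:
  assumes "h \<in> borel_measurable borel"
  shows "(\<integral>\<^sup>+a. h (- a) \<partial>std_normal) = (\<integral>\<^sup>+a. h a \<partial>std_normal)"
proof -
  have hm: "(\<lambda>a. ennreal (std_normal_density a) * h a) \<in> borel_measurable borel"
    using assms by measurable
  have "(\<integral>\<^sup>+a. h (- a) \<partial>std_normal) = (\<integral>\<^sup>+a. ennreal (std_normal_density (0 + -1 * a)) * h (0 + -1 * a) \<partial>lborel)"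
    using assms by (subst nn_integral_density) (auto simp: std_normal_density_def intro!: measurable_compose[of uminus])
  also have "\<dots> = (\<integral>\<^sup>+a. ennreal (std_normal_density a) * h a \<partial>lborel)"
    using nn_integral_real_affine[OF hm, of "-1" 0] by simp
  also have "\<dots> = (\<integral>\<^sup>+a. h a \<partial>std_normal)"
    using assms by (intro nn_integral_density[symmetric]) auto
  finally show ?thesis .
qed

lemma nn_integral_reflect:
  assumes i: "i < n" and F: "F \<in> borel_measurable (gauss n)"
  shows "(\<integral>\<^sup>+z. F (reflect n i z) \<partial>gauss n) = integral\<^sup>N (gauss n) F"
proof -
  define J where "J = {..<n} - {i}"
  have iJ: "insert i J = {..<n}" using i by (auto simp: J_def)
  have J: "finite J" "i \<notin> J" by (auto simp: J_def)
  have F': "F \<in> borel_measurable (PiM (insert i J) (\<lambda>_::nat. std_normal))"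
    using F iJ by (simp add: gauss_eq_PiM_std_normal)
  have FR: "(\<lambda>z. F (reflect n i z)) \<in> borel_measurable (PiM (insert i J) (\<lambda>_::nat. std_normal))"
    using measurable_comp[OF measurable_reflect[OF i] F] iJ by (simp add: comp_def gauss_eq_PiM_std_normal)
  have "(\<integral>\<^sup>+z. F (reflect n i z) \<partial>gauss n)
      = (\<integral>\<^sup>+x. \<integral>\<^sup>+a. F (reflect n i (x(i := a))) \<partial>std_normal \<partial>PiM J (\<lambda>_. std_normal))"
    using std_normal_product.product_nn_integral_insert[OF J FR] unfolding gauss_eq_PiM_std_normal iJ .
  also have "\<dots> = (\<integral>\<^sup>+x. \<integral>\<^sup>+a. F (x(i := a)) \<partial>std_normal \<partial>PiM J (\<lambda>_. std_normal))"
  proof (rule nn_integral_cong)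
    fix x assume x: "x \<in> space (PiM J (\<lambda>_::nat. std_normal))"
    have "x k = undefined" if "k \<notin> J" for k
      using x that by (auto simp: space_PiM PiE_def extensional_def)
    then have "reflect n i (x(i := a)) = x(i := - a)" for a
      unfolding reflect_def using i by (auto simp: fun_eq_iff J_def)
    moreover have "(\<lambda>a. F (x(i := a))) \<in> borel_measurable borel"
      using measurable_comp[OF measurable_component_update[OF x J(2)] F'] by (simp add: comp_def)
    ultimately show "(\<integral>\<^sup>+a. F (reflect n i (x(i := a))) \<partial>std_normal) = (\<integral>\<^sup>+a. F (x(i := a)) \<partial>std_normal)"
      using nn_integral_std_normal_uminus by simp
  qed
  also have "\<dots> = integral\<^sup>N (gauss n) F"
    using std_normal_product.product_nn_integral_insert[OF J F', symmetric] unfolding gauss_eq_PiM_std_normal iJ .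
  finally show ?thesis .
qed

definition dotn :: "nat \<Rightarrow> (nat \<Rightarrow> real) \<Rightarrow> (nat \<Rightarrow> real) \<Rightarrow> real" where
  "dotn n x y = (\<Sum>k<n. x k * y k)"

definition unit_vec :: "nat \<Rightarrow> nat \<Rightarrow> (nat \<Rightarrow> real)" where
  "unit_vec n p = (\<lambda>k\<in>{..<n}. if k = p then 1 else 0)"

definition gauss_isometry :: "nat \<Rightarrow> nat \<Rightarrow> ((nat \<Rightarrow> real) \<Rightarrow> (nat \<Rightarrow> real)) \<Rightarrow> bool" where
  "gauss_isometry n p G \<longleftrightarrow> G \<in> gauss n \<rightarrow>\<^sub>M gauss n \<and> distr (gauss n) (gauss n) G = gauss n \<and>
     (\<forall>x\<in>space (gauss n). \<forall>y\<in>space (gauss n). dotn n (G x) (G y) = dotn n x y) \<and>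
     (\<forall>z\<in>space (gauss n). \<forall>j<p. G z j = z j)"

lemma gauss_isometry_id: "gauss_isometry n p id"
  unfolding gauss_isometry_def using distr_id[of "gauss n"] by (simp add: id_def)

lemma gauss_isometry_comp:
  assumes G: "gauss_isometry n p G" and H: "gauss_isometry n p H"
  shows "gauss_isometry n p (H \<circ> G)"
proof -
  have Gm: "G \<in> gauss n \<rightarrow>\<^sub>M gauss n" and Hm: "H \<in> gauss n \<rightarrow>\<^sub>M gauss n"
    using G H by (auto simp: gauss_isometry_def)
  have "distr (gauss n) (gauss n) (H \<circ> G) = distr (distr (gauss n) (gauss n) G) (gauss n) H"
    by (rule distr_distr[OF Hm Gm, symmetric])
  also have "\<dots> = gauss n" using G H by (simp add: gauss_isometry_def)
  finally show ?thesis
    using G H measurable_space[OF Gm] measurable_comp[OF Gm Hm] unfolding gauss_isometry_def by auto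
qed

lemma dotn_givens:
  assumes il: "i < n" "l < n" "i \<noteq> l" and cs: "c\<^sup>2 + s\<^sup>2 = 1"
  shows "dotn n (givens n i l c s x) (givens n i l c s y) = dotn n x y"
proof -
  let ?G = "givens n i l c s"
  define f where "f k = x k * y k" for k
  define g where "g k = ?G x k * ?G y k" for k
  have gil: "g i + g l = f i + f l"
  proof -
    have "g i + g l = (c * x i - s * x l) * (c * y i - s * y l) + (s * x i + c * x l) * (s * y i + c * y l)"
      using il by (simp add: g_def givens_def)
    also have "\<dots> = (c\<^sup>2 + s\<^sup>2) * (x i * y i + x l * y l)" by (simp add: algebra_simps power2_eq_square)
    finally show ?thesis using cs by (simp add: f_def)
  qed
  have "(\<Sum>k<n. g k) = (\<Sum>k<n. f k + (if k = i then g i - f i else 0) + (if k = l then g l - f l else 0))"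
    using il by (intro sum.cong) (auto simp: g_def f_def givens_def)
  also have "\<dots> = (\<Sum>k<n. f k)"
    using il gil by (simp add: sum.distrib)
  finally show ?thesis by (simp add: dotn_def g_def f_def)
qed

lemma gauss_isometry_givens:
  assumes "i < n" "l < n" "i \<noteq> l" "p \<le> i" "p \<le> l" and "c\<^sup>2 + s\<^sup>2 = 1" "c \<noteq> -1"
  shows "gauss_isometry n p (givens n i l c s)"
proof -
  have "distr (gauss n) (gauss n) (givens n i l c s) = gauss n"
    using assms nn_integral_givens
    by (intro distr_eq_self_if_nn_integral_invariant measurable_givens) auto
  then show ?thesis
    unfolding gauss_isometry_def using assms measurable_givens dotn_givens
    by (auto simp: givens_def)
qed

lemma gauss_isometry_reflect:
  assumes "i < n" "p \<le> i"
  shows "gauss_isometry n p (reflect n i)"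
proof -
  have "distr (gauss n) (gauss n) (reflect n i) = gauss n"
    using assms nn_integral_reflect
    by (intro distr_eq_self_if_nn_integral_invariant measurable_reflect) auto
  moreover have "dotn n (reflect n i x) (reflect n i y) = dotn n x y" for x y
    unfolding dotn_def reflect_def by (intro sum.cong) auto
  ultimately show ?thesis
    unfolding gauss_isometry_def using assms measurable_reflect by (auto simp: reflect_def)
qed


lemma gauss_isometry_space:
  assumes "gauss_isometry n p G" "x \<in> space (gauss n)"
  shows "G x \<in> space (gauss n)"
  using assms(1) measurable_space[of G "gauss n" "gauss n" x, OF _ assms(2)]
  unfolding gauss_isometry_def by simp

lemma gauss_isometry_dotn:
  assumes "gauss_isometry n p G" "x \<in> space (gauss n)" "y \<in> space (gauss n)"
  shows "dotn n (G x) (G y) = dotn n x y"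
  using assms unfolding gauss_isometry_def by simp

lemma dotn_unit_vec:
  assumes "p < n" shows "dotn n (unit_vec n p) y = y p"
proof -
  have "dotn n (unit_vec n p) y = (\<Sum>k<n. if k = p then y k else 0)"
    unfolding dotn_def unit_vec_def by (intro sum.cong) auto
  then show ?thesis using assms by simp
qed

lemma rotation_annihilates:
  fixes u v :: real
  shows "\<exists>c s. c\<^sup>2 + s\<^sup>2 = 1 \<and> c \<noteq> -1 \<and> s * u + c * v = 0"
proof (cases "v = 0")
  case True
  then show ?thesis by (intro exI[of _ 1] exI[of _ 0]) simp
next
  case False
  define r where "r = sqrt (u\<^sup>2 + v\<^sup>2)"
  have r2: "r\<^sup>2 = u\<^sup>2 + v\<^sup>2" by (simp add: r_def)
  have r: "r > 0" using False by (simp add: r_def add_nonneg_pos)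
  have "(u / r)\<^sup>2 + (- v / r)\<^sup>2 = 1"
    using r r2 False by (simp add: power_divide add_divide_distrib[symmetric])
  moreover have "u / r \<noteq> -1"
  proof
    assume "u / r = -1"
    then have "u\<^sup>2 = r\<^sup>2" using r by (simp add: field_simps)
    with r2 False show False by simp
  qed
  moreover have "- v / r * u + u / r * v = 0" by (simp add: field_simps)
  ultimately show ?thesis by blast
qed

lemma gauss_isometry_to_unit_vec_single:
  assumes p: "p < n" and a: "a \<in> space (gauss n)" "dotn n a a = 1"
    and supp: "\<And>k. k < n \<Longrightarrow> k \<noteq> p \<Longrightarrow> a k = 0"
  shows "\<exists>G. gauss_isometry n p G \<and> G a = unit_vec n p"
proof -
  have undef: "a k = undefined" if "n \<le> k" for k using a(1) that by (auto simp: space_gauss)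
  have "dotn n a a = (\<Sum>k<n. if k = p then a p * a p else 0)"
    unfolding dotn_def using supp by (intro sum.cong) auto
  with a(2) p have "a p * a p = 1" by simp
  then have "a p = 1 \<or> a p = -1" by (metis mult_cancel_left1 square_eq_iff)
  then show ?thesis
  proof
    assume "a p = 1"
    then have "id a = unit_vec n p" using supp undef by (auto simp: unit_vec_def fun_eq_iff)
    then show ?thesis using gauss_isometry_id by blast
  next
    assume "a p = -1"
    then have "reflect n p a = unit_vec n p" using supp undef by (auto simp: unit_vec_def reflect_def fun_eq_iff)
    then show ?thesis using gauss_isometry_reflect[OF p order.refl] by blast
  qed
qed

text \<open>A unit vector supported on \<open>[p, q)\<close> is moved to \<open>e\<^sub>p\<close> by Givens rotations in the planes
  \<open>(q - 1, q), (q - 2, q - 1), \<dots>\<close>, each killing the last coordinate of the support.\<close>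

lemma gauss_isometry_to_unit_vec:
  assumes "p < q" "q \<le> n" "a \<in> space (gauss n)" "dotn n a a = 1"
    "\<forall>j<n. (j < p \<or> q \<le> j) \<longrightarrow> a j = 0"
  shows "\<exists>G. gauss_isometry n p G \<and> G a = unit_vec n p"
  using assms
proof (induction q arbitrary: a)
  case 0
  then show ?case by simp
next
  case (Suc q)
  show ?case
  proof (cases "q = p")
    case True
    have "a k = 0" if "k < n" "k \<noteq> p" for k
      using Suc.prems(5) that True by (auto simp: Suc_le_eq nat_neq_iff)
    with Suc.prems(1-4) show ?thesis by (intro gauss_isometry_to_unit_vec_single) simp_all
  next
    case False
    with Suc.prems(1,2) have pq: "p < q" and qn: "q < n" by simp_all
    obtain c s where cs: "c\<^sup>2 + s\<^sup>2 = 1" "c \<noteq> -1" and kill: "s * a (q - 1) + c * a q = 0"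
      using rotation_annihilates by blast
    let ?R = "givens n (q - 1) q c s"
    have R: "gauss_isometry n p ?R" using pq qn cs by (intro gauss_isometry_givens) auto
    define b where "b = ?R a"
    have b: "b \<in> space (gauss n)" "dotn n b b = 1"
      unfolding b_def gauss_isometry_dotn[OF R Suc.prems(3,3)]
      by (rule gauss_isometry_space[OF R Suc.prems(3)], rule Suc.prems(4))
    have "b j = 0" if j: "j < n" "j < p \<or> q \<le> j" for j
    proof (cases "j = q")
      case True
      moreover have "q \<noteq> q - 1" using pq by simp
      ultimately show ?thesis using kill qn by (simp add: b_def givens_def)
    next
      case False
      with j pq have "j \<noteq> q - 1" "j < p \<or> Suc q \<le> j" by auto
      then show ?thesis using Suc.prems(5) j False by (auto simp: b_def givens_def)
    qed
    then have "\<forall>j<n. (j < p \<or> q \<le> j) \<longrightarrow> b j = 0" by blast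
    then obtain G where G: "gauss_isometry n p G" "G b = unit_vec n p"
      using Suc.IH[OF pq less_imp_le[OF qn] b] by blast
    have "(G \<circ> ?R) a = unit_vec n p" using G(2) by (simp add: b_def)
    then show ?thesis using gauss_isometry_comp[OF R G(1)] by blast
  qed
qed

lemma gauss_isometry_onto_coords:
  assumes "p \<le> n" "\<forall>j<p. u j \<in> space (gauss n)"
    "\<forall>j<p. \<forall>l<p. dotn n (u j) (u l) = (if j = l then 1 else 0)"
  shows "\<exists>T. gauss_isometry n 0 T \<and> (\<forall>z\<in>space (gauss n). \<forall>j<p. T z j = dotn n (u j) z)"
  using assms
proof (induction p)
  case 0
  then show ?case using gauss_isometry_id by blast
next
  case (Suc p)
  obtain T where T: "gauss_isometry n 0 T" and T_coef: "\<forall>z\<in>space (gauss n). \<forall>j<p. T z j = dotn n (u j) z"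
    using Suc by auto
  have up: "u p \<in> space (gauss n)" using Suc.prems by simp
  define a where "a = T (u p)"
  have a: "a \<in> space (gauss n)" "dotn n a a = 1"
    unfolding a_def using gauss_isometry_space[OF T up] gauss_isometry_dotn[OF T up up] Suc.prems(3)
    by simp_all
  have "a j = 0" if "j < p" for j
    using T_coef up Suc.prems(3) that by (simp add: a_def)
  then have "\<forall>j<n. (j < p \<or> n \<le> j) \<longrightarrow> a j = 0" by auto
  moreover have p: "p < n" using Suc.prems(1) by simp
  ultimately obtain G where G: "gauss_isometry n p G" "G a = unit_vec n p"
    using gauss_isometry_to_unit_vec[OF _ order.refl a] by blast
  have G0: "gauss_isometry n 0 G" using G(1) by (simp add: gauss_isometry_def)
  have "(G \<circ> T) z j = dotn n (u j) z" if z: "z \<in> space (gauss n)" and j: "j < Suc p" for z j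
  proof (cases "j < p")
    case True
    then show ?thesis
      using G(1) gauss_isometry_space[OF T z] T_coef z by (simp add: gauss_isometry_def)
  next
    case False
    then have "j = p" using j by simp
    have "dotn n (u p) z = dotn n (G a) (G (T z))"
      unfolding a_def gauss_isometry_dotn[OF G0 gauss_isometry_space[OF T up] gauss_isometry_space[OF T z]]
      by (rule gauss_isometry_dotn[OF T up z, symmetric])
    then show ?thesis unfolding G(2) dotn_unit_vec[OF p] \<open>j = p\<close> by simp
  qed
  with gauss_isometry_comp[OF T G0] show ?case by blast
qed


section \<open>The Fisher ratio\<close>

lemma emeasure_std_normal_finite: "finite A \<Longrightarrow> emeasure std_normal A = 0"
proof -
  assume "finite A"
  then have "A \<in> null_sets lborel" by (rule finite_imp_null_set_lborel)
  then have "A \<in> null_sets std_normal"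
    by (subst null_sets_density_iff) (auto intro: AE_mp[OF AE_not_in])
  then show ?thesis by auto
qed

lemma finite_quadratic_roots:
  fixes \<alpha> C :: real assumes "\<alpha> \<noteq> 0"
  shows "finite {a. \<alpha> * a\<^sup>2 + C = 0}"
proof -
  have "{a. \<alpha> * a\<^sup>2 + C = 0} \<subseteq> {sqrt (- C / \<alpha>), - sqrt (- C / \<alpha>)}"
  proof
    fix a assume "a \<in> {a. \<alpha> * a\<^sup>2 + C = 0}"
    then have "a\<^sup>2 = - C / \<alpha>" using assms by (auto simp: field_simps)
    then have "\<bar>a\<bar> = sqrt (- C / \<alpha>)" by (metis real_sqrt_abs)
    then show "a \<in> {sqrt (- C / \<alpha>), - sqrt (- C / \<alpha>)}" by (auto simp: abs_if split: if_splits)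
  qed
  then show ?thesis by (rule finite_subset) simp
qed

text \<open>Fubini in the coordinate \<open>j\<close>: for fixed other coordinates the set is finite.\<close>

lemma emeasure_gauss_quadratic_null:
  fixes \<alpha> :: real
  assumes j: "j < n" and \<alpha>: "\<alpha> \<noteq> 0"
    and C: "C \<in> borel_measurable (gauss n)" and C_indep: "\<And>z a. C (z(j := a)) = C z"
  shows "emeasure (gauss n) {z \<in> space (gauss n). \<alpha> * (z j)\<^sup>2 + C z = 0} = 0"
proof -
  define J where "J = {..<n} - {j}"
  have jJ: "insert j J = {..<n}" using j by (auto simp: J_def)
  have J: "finite J" "j \<notin> J" by (auto simp: J_def)
  let ?A = "{z \<in> space (gauss n). \<alpha> * (z j)\<^sup>2 + C z = 0}"
  have A: "?A \<in> sets (gauss n)" using C measurable_coordinate_gauss[OF j] by measurable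
  have F: "indicator ?A \<in> borel_measurable (PiM (insert j J) (\<lambda>_::nat. std_normal))"
    using A unfolding jJ gauss_eq_PiM_std_normal by simp
  have "emeasure (gauss n) ?A = integral\<^sup>N (gauss n) (indicator ?A)" using A by simp
  also have "\<dots> = (\<integral>\<^sup>+x. \<integral>\<^sup>+a. indicator ?A (x(j := a)) \<partial>std_normal \<partial>PiM J (\<lambda>_. std_normal))"
    using std_normal_product.product_nn_integral_insert[OF J F] unfolding gauss_eq_PiM_std_normal jJ .
  also have "\<dots> = (\<integral>\<^sup>+x. 0 \<partial>PiM J (\<lambda>_. std_normal))"
  proof (rule nn_integral_cong)
    fix x assume x: "x \<in> space (PiM J (\<lambda>_::nat. std_normal))"
    have "x(j := a) \<in> space (gauss n)" for a
      using measurable_space[OF measurable_component_update[OF x J(2)], of a]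
      unfolding jJ gauss_eq_PiM_std_normal by simp
    then have "(\<lambda>a. indicator ?A (x(j := a)) :: ennreal) = indicator {a. \<alpha> * a\<^sup>2 + C x = 0}"
      using C_indep by (auto simp: indicator_def fun_eq_iff)
    moreover have "emeasure std_normal {a. \<alpha> * a\<^sup>2 + C x = 0} = 0"
      by (rule emeasure_std_normal_finite[OF finite_quadratic_roots[OF \<alpha>]])
    ultimately show "(\<integral>\<^sup>+a. indicator ?A (x(j := a)) \<partial>std_normal) = 0" by simp
  qed
  finally show ?thesis by simp
qed

definition fisher_ratio :: "nat \<Rightarrow> nat \<Rightarrow> (nat \<Rightarrow> real) \<Rightarrow> real" where
  "fisher_ratio d1 d2 z = ((\<Sum>i<d1. (z i)\<^sup>2) / real d1) / ((\<Sum>i\<in>{d1..<d1+d2}. (z i)\<^sup>2) / real d2)"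

lemma fisher_tail_eq_measure_fisher_ratio:
  "fisher_tail d1 d2 u = measure (gauss (d1 + d2)) {z \<in> space (gauss (d1 + d2)). fisher_ratio d1 d2 z > u}"
  unfolding fisher_tail_def fisher_ratio_def ..

lemma measurable_fisher_ratio: "fisher_ratio d1 d2 \<in> borel_measurable (gauss (d1 + d2))"
  unfolding fisher_ratio_def by (intro borel_measurable_divide measurable_sum_squares_gauss) auto

lemma fisher_ratio_nonneg: "fisher_ratio d1 d2 z \<ge> 0"
  unfolding fisher_ratio_def by (intro divide_nonneg_nonneg sum_nonneg) auto

text \<open>On a level set of the Fisher ratio either the denominator vanishes or \<open>z\<^sub>0\<close> solves a
  quadratic equation whose other coefficients do not involve \<open>z\<^sub>0\<close>; in both cases a single
  Gaussian coordinate is constrained to finitely many values.\<close>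

lemma fisher_ratio_eq_cases:
  assumes d: "1 \<le> d1" "1 \<le> d2" and z: "fisher_ratio d1 d2 z = u"
  shows "real d2 * (z 0)\<^sup>2 + (real d2 * (\<Sum>i\<in>{1..<d1}. (z i)\<^sup>2) - u * real d1 * (\<Sum>i\<in>{d1..<d1+d2}. (z i)\<^sup>2)) = 0
       \<or> 1 * (z (d1 + d2 - 1))\<^sup>2 + (\<Sum>i\<in>{d1..<d1+d2-1}. (z i)\<^sup>2) = 0"
proof -
  define B where "B = (\<Sum>i\<in>{d1..<d1+d2}. (z i)\<^sup>2)"
  have "{d1..<d1+d2} = insert (d1 + d2 - 1) {d1..<d1+d2-1}" using d by auto
  then have B: "B = (z (d1 + d2 - 1))\<^sup>2 + (\<Sum>i\<in>{d1..<d1+d2-1}. (z i)\<^sup>2)"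
    unfolding B_def by simp
  have "{..<d1} = insert 0 {1..<d1}" using d by auto
  then have A: "(\<Sum>i<d1. (z i)\<^sup>2) = (z 0)\<^sup>2 + (\<Sum>i\<in>{1..<d1}. (z i)\<^sup>2)" by simp
  show ?thesis
  proof (cases "B = 0")
    case False
    have "((\<Sum>i<d1. (z i)\<^sup>2) / real d1) / (B / real d2) = u"
      using z unfolding fisher_ratio_def B_def .
    then have "real d2 * (\<Sum>i<d1. (z i)\<^sup>2) - u * real d1 * B = 0"
      using False d by (auto simp: field_simps)
    then show ?thesis unfolding A B_def by (simp add: algebra_simps)
  qed (use B in simp)
qed

lemma measure_fisher_ratio_eq:
  assumes d: "1 \<le> d1" "1 \<le> d2"
  shows "measure (gauss (d1 + d2)) {z \<in> space (gauss (d1 + d2)). fisher_ratio d1 d2 z = u} = 0"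
proof -
  define n where "n = d1 + d2"
  define C1 where "C1 z = real d2 * (\<Sum>i\<in>{1..<d1}. (z i)\<^sup>2) - u * real d1 * (\<Sum>i\<in>{d1..<n}. (z i)\<^sup>2)"
    for z :: "nat \<Rightarrow> real"
  define C2 where "C2 z = (\<Sum>i\<in>{d1..<n-1}. (z i)\<^sup>2)" for z :: "nat \<Rightarrow> real"
  let ?S1 = "{z \<in> space (gauss n). real d2 * (z 0)\<^sup>2 + C1 z = 0}"
  let ?S2 = "{z \<in> space (gauss n). 1 * (z (n - 1))\<^sup>2 + C2 z = 0}"
  have n: "0 < n" "n - 1 < n" using d by (auto simp: n_def)
  have C1: "C1 \<in> borel_measurable (gauss n)"
    unfolding C1_def by (intro borel_measurable_diff borel_measurable_times borel_measurable_const
        measurable_sum_squares_gauss) (auto simp: n_def)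
  have C2: "C2 \<in> borel_measurable (gauss n)" unfolding C2_def by (rule measurable_sum_squares_gauss) auto
  have "C1 (z(0 := a)) = C1 z" for z a
    unfolding C1_def using d by (auto intro!: sum.cong arg_cong2[where f="(-)"])
  then have S1: "?S1 \<in> null_sets (gauss n)"
    using d C1 measurable_coordinate_gauss[OF n(1)]
    by (intro null_setsI emeasure_gauss_quadratic_null[OF n(1) _ C1]) (simp_all, measurable)
  have "C2 (z(n - 1 := a)) = C2 z" for z a
    unfolding C2_def by (intro sum.cong) auto
  then have S2: "?S2 \<in> null_sets (gauss n)"
    using C2 measurable_coordinate_gauss[OF n(2)]
    by (intro null_setsI emeasure_gauss_quadratic_null[OF n(2) _ C2]) (simp_all, measurable)
  have "{z \<in> space (gauss n). fisher_ratio d1 d2 z = u} \<subseteq> ?S1 \<union> ?S2"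
  proof
    fix z assume "z \<in> {z \<in> space (gauss n). fisher_ratio d1 d2 z = u}"
    with fisher_ratio_eq_cases[OF d, of z u] show "z \<in> ?S1 \<union> ?S2"
      unfolding C1_def C2_def n_def by blast
  qed
  then have "emeasure (gauss n) {z \<in> space (gauss n). fisher_ratio d1 d2 z = u} = 0"
    using null_sets.Un[OF S1 S2] measurable_fisher_ratio[of d1 d2] unfolding n_def
    by (intro null_sets_subset[THEN null_setsD1]) auto
  then show ?thesis unfolding n_def by (simp add: measure_def)
qed

text \<open>Right continuity of the tail function \<open>u \<mapsto> P(R > u)\<close> at the infimum of a sublevel set.\<close>

lemma (in prob_space) prob_gt_Inf_le:
  fixes R :: "'a \<Rightarrow> real"
  assumes R: "R \<in> borel_measurable M" and S: "S \<noteq> {}" "bdd_below S"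
    and le: "\<And>s. s \<in> S \<Longrightarrow> prob {x \<in> space M. R x > s} \<le> t"
  shows "prob {x \<in> space M. R x > Inf S} \<le> t"
proof -
  define A where "A k = {x \<in> space M. R x > Inf S + 1 / Suc k}" for k :: nat
  have A_sets: "range A \<subseteq> events" unfolding A_def using R by auto
  have "incseq A"
  proof (rule incseq_SucI)
    fix k
    have "Inf S + 1 / real (Suc (Suc k)) \<le> Inf S + 1 / real (Suc k)" by (simp add: frac_le)
    then show "A k \<subseteq> A (Suc k)" unfolding A_def by auto
  qed
  moreover have "(\<Union>k. A k) = {x \<in> space M. R x > Inf S}"
  proof
    show "(\<Union>k. A k) \<subseteq> {x \<in> space M. R x > Inf S}"
      unfolding A_def by (auto intro: less_trans[rotated])
    show "{x \<in> space M. R x > Inf S} \<subseteq> (\<Union>k. A k)"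
    proof
      fix x assume x: "x \<in> {x \<in> space M. R x > Inf S}"
      then obtain k where "inverse (real (Suc k)) < R x - Inf S"
        using reals_Archimedean[of "R x - Inf S"] by auto
      then have "x \<in> A k" using x unfolding A_def by (simp add: inverse_eq_divide)
      then show "x \<in> (\<Union>k. A k)" by blast
    qed
  qed
  ultimately have lim: "(\<lambda>k. prob (A k)) \<longlonglongrightarrow> prob {x \<in> space M. R x > Inf S}"
    using finite_Lim_measure_incseq[OF A_sets] by simp
  have "prob (A k) \<le> t" for k
  proof -
    obtain s where s: "s \<in> S" "s < Inf S + 1 / real (Suc k)"
      using cInf_less_iff[OF S, of "Inf S + 1 / real (Suc k)"] by auto
    have "prob (A k) \<le> prob {x \<in> space M. R x > s}"
      unfolding A_def using s(2) R by (intro finite_measure_mono) auto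
    then show ?thesis using le[OF s(1)] by simp
  qed
  with lim show ?thesis by (intro LIMSEQ_le_const2) auto
qed

lemma (in prob_space) prob_tail_transform_le:
  fixes R :: "'a \<Rightarrow> real" and F :: "real \<Rightarrow> real"
  assumes R: "R \<in> borel_measurable M" and R_nonneg: "\<And>x. R x \<ge> 0"
    and no_atom: "\<And>u. prob {x \<in> space M. R x = u} = 0"
    and F: "\<And>u. F u = prob {x \<in> space M. R x > u}"
    and t: "0 \<le> t" "t < 1"
  shows "prob {x \<in> space M. F (R x) \<le> t} \<le> t"
proof -
  define S where "S = {u. F u \<le> t}"
  have F_antimono: "F v \<le> F u" if "u \<le> v" for u v
    unfolding F using that R by (intro finite_measure_mono) auto
  have "0 \<le> s" if "s \<in> S" for s
  proof (rule ccontr)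
    assume "\<not> 0 \<le> s"
    then have "{x \<in> space M. R x > s} = space M"
      using R_nonneg by (auto simp: not_le intro: less_le_trans)
    then have "F s = 1" by (simp add: F prob_space)
    with that t show False by (simp add: S_def)
  qed
  then have S_bdd: "bdd_below S" by (auto simp: bdd_below_def)
  show ?thesis
  proof (cases "S = {}")
    case True
    then have "{x \<in> space M. F (R x) \<le> t} = {}" by (auto simp: S_def)
    then show ?thesis using t by (metis measure_empty)
  next
    case False
    have "{x \<in> space M. F (R x) \<le> t} \<subseteq> {x \<in> space M. R x \<ge> Inf S}"
      using cInf_lower[OF _ S_bdd] by (auto simp: S_def)
    then have "prob {x \<in> space M. F (R x) \<le> t} \<le> prob {x \<in> space M. R x \<ge> Inf S}"
      using R by (intro finite_measure_mono) auto
    also have "{x \<in> space M. R x \<ge> Inf S} = {x \<in> space M. R x > Inf S} \<union> {x \<in> space M. R x = Inf S}"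
      by auto
    also have "prob \<dots> = prob {x \<in> space M. R x > Inf S} + prob {x \<in> space M. R x = Inf S}"
      using R by (intro finite_measure_Union) auto
    also have "\<dots> \<le> t"
      using prob_gt_Inf_le[OF R False S_bdd] no_atom by (simp add: F S_def)
    finally show ?thesis .
  qed
qed

lemma fisher_tail_nonneg: "0 \<le> fisher_tail d1 d2 u"
  unfolding fisher_tail_def by simp

lemma fisher_tail_le_1: "fisher_tail d1 d2 u \<le> 1"
  unfolding fisher_tail_def using prob_space.prob_le_1[OF prob_space_gauss] by simp

lemma fisher_tail_antimono:
  assumes "u \<le> v" shows "fisher_tail d1 d2 v \<le> fisher_tail d1 d2 u"
proof -
  interpret prob_space "gauss (d1 + d2)" by (rule prob_space_gauss)
  show ?thesis unfolding fisher_tail_eq_measure_fisher_ratio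
    using assms measurable_fisher_ratio[of d1 d2] by (intro finite_measure_mono) auto
qed

lemma measurable_fisher_tail: "fisher_tail d1 d2 \<in> borel_measurable borel"
proof -
  have "(\<lambda>u. - fisher_tail d1 d2 u) \<in> borel_measurable borel"
    by (rule borel_measurable_mono) (auto simp: mono_def fisher_tail_antimono)
  then have "(\<lambda>u. - (- fisher_tail d1 d2 u)) \<in> borel_measurable borel" by measurable
  then show ?thesis by simp
qed

lemma prob_fisher_tail_fisher_ratio_le:
  assumes d: "1 \<le> d1" "1 \<le> d2" and t: "0 \<le> t"
  shows "measure (gauss (d1 + d2))
           {z \<in> space (gauss (d1 + d2)). fisher_tail d1 d2 (fisher_ratio d1 d2 z) \<le> t} \<le> t"
proof (cases "t < 1")
  case True
  interpret prob_space "gauss (d1 + d2)" by (rule prob_space_gauss)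
  show ?thesis
    using measurable_fisher_ratio fisher_ratio_nonneg measure_fisher_ratio_eq[OF d] t True
    by (intro prob_tail_transform_le) (auto simp: fisher_tail_eq_measure_fisher_ratio)
next
  case False
  then show ?thesis using prob_space.prob_le_1[OF prob_space_gauss] by (meson le_less_trans not_le)
qed

lemma fisher_tail_eventually_le:
  assumes a: "0 < a" shows "\<exists>u\<ge>0. fisher_tail d1 d2 u \<le> a"
proof -
  interpret prob_space "gauss (d1 + d2)" by (rule prob_space_gauss)
  define A where "A k = {z \<in> space (gauss (d1 + d2)). fisher_ratio d1 d2 z > real k}" for k :: nat
  have A_sets: "range A \<subseteq> events" unfolding A_def using measurable_fisher_ratio[of d1 d2] by auto
  have "decseq A" unfolding A_def decseq_def by auto
  moreover have "(\<Inter>k. A k) = {}"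
  proof (rule equals0I)
    fix z assume "z \<in> (\<Inter>k. A k)"
    then have "real k < fisher_ratio d1 d2 z" for k by (auto simp: A_def)
    moreover obtain k where "fisher_ratio d1 d2 z < real k" using reals_Archimedean2 by blast
    ultimately show False using less_asym by blast
  qed
  ultimately have "(\<lambda>k. prob (A k)) \<longlonglongrightarrow> 0"
    using finite_Lim_measure_decseq[OF A_sets] by simp
  then have "\<forall>\<^sub>F k in sequentially. prob (A k) < a" using a by (rule order_tendstoD(2))
  then obtain k where "prob (A k) < a" by (auto simp: eventually_sequentially)
  then have "fisher_tail d1 d2 (real k) \<le> a" by (simp add: fisher_tail_eq_measure_fisher_ratio A_def)
  then show ?thesis by (intro exI[of _ "real k"]) auto
qed

lemma fisher_tail_inv_antimono:
  assumes "0 < a" "a \<le> b"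
  shows "fisher_tail_inv d1 d2 b \<le> fisher_tail_inv d1 d2 a"
  unfolding fisher_tail_inv_def
proof (rule cInf_superset_mono)
  show "{u. 0 \<le> u \<and> fisher_tail d1 d2 u \<le> a} \<noteq> {}"
    using fisher_tail_eventually_le[OF assms(1)] by auto
  show "bdd_below {u. 0 \<le> u \<and> fisher_tail d1 d2 u \<le> b}" by (auto simp: bdd_below_def)
  show "{u. 0 \<le> u \<and> fisher_tail d1 d2 u \<le> a} \<subseteq> {u. 0 \<le> u \<and> fisher_tail d1 d2 u \<le> b}"
    using assms by auto
qed


section \<open>The projection statistic\<close>

lemma dotn_commute: "dotn n x y = dotn n y x"
  unfolding dotn_def by (simp add: mult.commute)

lemma dotn_sum_left: "dotn n (\<lambda>i. \<Sum>j\<in>J. f j i) y = (\<Sum>j\<in>J. dotn n (f j) y)"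
  unfolding dotn_def by (simp add: sum_distrib_right sum.swap[of _ J])

lemma dotn_scale_left: "dotn n (\<lambda>i. c * x i) y = c * dotn n x y"
  unfolding dotn_def by (simp add: sum_distrib_left mult.assoc)

lemma dotn_scale_right: "dotn n x (\<lambda>i. c * y i) = c * dotn n x y"
  unfolding dotn_def by (simp add: sum_distrib_left algebra_simps)

lemma dotn_diff_left: "dotn n (\<lambda>i. x i - z i) y = dotn n x y - dotn n z y"
  unfolding dotn_def by (simp add: sum_subtractf left_diff_distrib)

lemma dotn_diff_right: "dotn n x (\<lambda>i. y i - z i) = dotn n x y - dotn n x z"
  unfolding dotn_def by (simp add: sum_subtractf right_diff_distrib)

lemma dotn_cong:
  "(\<And>i. i < n \<Longrightarrow> x i = x' i) \<Longrightarrow> (\<And>i. i < n \<Longrightarrow> y i = y' i) \<Longrightarrow> dotn n x y = dotn n x' y'"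
  unfolding dotn_def by (intro sum.cong) auto

lemma dotn_self_eq_0D: "dotn n d d = 0 \<Longrightarrow> i < n \<Longrightarrow> d i = 0"
  unfolding dotn_def by (subst (asm) sum_nonneg_eq_0_iff) auto

lemma normn_sq: "(normn n v)\<^sup>2 = (1 / real n) * dotn n v v"
  unfolding normn_def dotn_def by (simp add: power2_eq_square[symmetric] sum_nonneg)

lemma test_stat_pos_mono_level:
  assumes "0 < a" "a \<le> b" and "0 < test_stat n X r V K a U"
  shows "0 < test_stat n X r V K b U"
proof -
  from assms(3) obtain k where k: "k \<in> K" "k \<le> r"
    and pos: "0 < ereal (phi n X V (min k r) U - real (min k r) * fisher_tail_inv (min k r) (n - min k r) a)"
    unfolding test_stat_def less_SUP_iff by blast
  have "real (min k r) * fisher_tail_inv (min k r) (n - min k r) b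
      \<le> real (min k r) * fisher_tail_inv (min k r) (n - min k r) a"
    using fisher_tail_inv_antimono[OF assms(1,2)] by (intro mult_left_mono) auto
  with pos have "0 < ereal (phi n X V (min k r) U - real (min k r) * fisher_tail_inv (min k r) (n - min k r) b)"
    by simp
  with k show ?thesis unfolding test_stat_def less_SUP_iff by blast
qed


locale eig_design =
  fixes n :: nat and X :: "nat \<Rightarrow> 'h::real_inner" and r :: nat
    and lam :: "nat \<Rightarrow> real" and V :: "nat \<Rightarrow> 'h"
  assumes eig: "is_eigdec n X r lam V" and n_pos: "0 < n"
begin

definition col :: "nat \<Rightarrow> nat \<Rightarrow> real" where
  "col j i = X i \<bullet> V j"

definition ucol :: "nat \<Rightarrow> nat \<Rightarrow> real" where
  "ucol j = (\<lambda>i\<in>{..<n}. col j i / sqrt (real n * lam j))"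

lemma lam_pos: "j < r \<Longrightarrow> 0 < lam j"
  using eig by (simp add: is_eigdec_def)

lemma dotn_col:
  assumes "j < r" "l < r"
  shows "dotn n (col j) (col l) = (if j = l then real n * lam j else 0)"
proof -
  have "emp_cov n X (V j) \<bullet> V l = lam j * (V j \<bullet> V l)"
    using eig assms by (simp add: is_eigdec_def)
  also have "\<dots> = (if j = l then lam j else 0)"
    using eig assms by (simp add: is_eigdec_def)
  finally have "(1 / real n) * (\<Sum>i<n. (X i \<bullet> V j) * (X i \<bullet> V l)) = (if j = l then lam j else 0)"
    by (simp add: emp_cov_def inner_sum_left)
  then show ?thesis unfolding dotn_def col_def using n_pos by (auto simp: field_simps split: if_splits)
qed

lemma ucol_space: "ucol j \<in> space (gauss n)"
  by (simp add: ucol_def space_gauss)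

lemma col_eq_ucol: "j < r \<Longrightarrow> i < n \<Longrightarrow> col j i = sqrt (real n * lam j) * ucol j i"
  using lam_pos[of j] n_pos by (simp add: ucol_def)

lemma dotn_ucol:
  assumes "j < r" "l < r"
  shows "dotn n (ucol j) (ucol l) = (if j = l then 1 else 0)"
proof -
  have "dotn n (ucol j) (ucol l)
      = dotn n (\<lambda>i. (1 / sqrt (real n * lam j)) * col j i) (\<lambda>i. (1 / sqrt (real n * lam l)) * col l i)"
    by (rule dotn_cong) (auto simp: ucol_def)
  also have "\<dots> = (1 / sqrt (real n * lam j)) * (1 / sqrt (real n * lam l)) * dotn n (col j) (col l)"
    by (simp only: dotn_scale_left dotn_scale_right mult.assoc)
  also have "\<dots> = (if j = l then 1 else 0)"
    using dotn_col[OF assms] lam_pos[OF assms(1)] n_pos by (auto simp: real_sqrt_mult[symmetric])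
  finally show ?thesis .
qed

definition proj_ucol :: "nat \<Rightarrow> (nat \<Rightarrow> real) \<Rightarrow> (nat \<Rightarrow> real)" where
  "proj_ucol kh U = (\<lambda>i. if i < n then (\<Sum>j<kh. dotn n U (ucol j) * ucol j i) else 0)"

definition proj_energy :: "nat \<Rightarrow> (nat \<Rightarrow> real) \<Rightarrow> real" where
  "proj_energy kh U = (\<Sum>j<kh. (dotn n U (ucol j))\<^sup>2)"

lemma dotn_proj_ucol_left: "dotn n (proj_ucol kh U) y = (\<Sum>j<kh. dotn n U (ucol j) * dotn n (ucol j) y)"
proof -
  have "dotn n (proj_ucol kh U) y = dotn n (\<lambda>i. \<Sum>j<kh. dotn n U (ucol j) * ucol j i) y"
    by (rule dotn_cong) (auto simp: proj_ucol_def)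
  then show ?thesis by (simp add: dotn_sum_left dotn_scale_left)
qed

lemma dotn_ucol_proj_ucol:
  assumes "kh \<le> r" "l < kh"
  shows "dotn n (ucol l) (proj_ucol kh U) = dotn n U (ucol l)"
proof -
  have "dotn n (ucol l) (proj_ucol kh U) = (\<Sum>j<kh. dotn n U (ucol j) * dotn n (ucol j) (ucol l))"
    by (simp add: dotn_commute[of n "ucol l"] dotn_proj_ucol_left)
  also have "\<dots> = (\<Sum>j<kh. if j = l then dotn n U (ucol l) else 0)"
    using assms dotn_ucol by (intro sum.cong) auto
  finally show ?thesis using assms by simp
qed

definition is_lsq :: "nat \<Rightarrow> (nat \<Rightarrow> real) \<Rightarrow> (nat \<Rightarrow> real) \<Rightarrow> bool" where
  "is_lsq kh U p \<longleftrightarrow> (\<exists>c. \<forall>i<n. p i = (\<Sum>j<kh. c j * (X i \<bullet> V j))) \<and>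
       (\<forall>j<kh. (\<Sum>i<n. (U i - p i) * (X i \<bullet> V j)) = 0) \<and> (\<forall>i\<ge>n. p i = 0)"

lemma normal_eq_iff_dotn_ucol:
  assumes "kh \<le> r" "l < kh"
  shows "(\<Sum>i<n. (U i - p i) * (X i \<bullet> V l)) = 0 \<longleftrightarrow> dotn n U (ucol l) = dotn n p (ucol l)"
proof -
  have "(\<Sum>i<n. (U i - p i) * (X i \<bullet> V l)) = sqrt (real n * lam l) * dotn n (\<lambda>i. U i - p i) (ucol l)"
    unfolding dotn_def using col_eq_ucol assms by (simp add: col_def sum_distrib_left algebra_simps)
  then show ?thesis using lam_pos[of l] assms n_pos by (simp add: dotn_diff_left)
qed

lemma is_lsq_proj_ucol:
  assumes kr: "kh \<le> r"
  shows "is_lsq kh U (proj_ucol kh U)"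
  unfolding is_lsq_def
proof (intro conjI allI impI)
  show "\<exists>c. \<forall>i<n. proj_ucol kh U i = (\<Sum>j<kh. c j * (X i \<bullet> V j))"
    by (rule exI[of _ "\<lambda>j. dotn n U (ucol j) / sqrt (real n * lam j)"])
       (auto simp: proj_ucol_def ucol_def col_def intro!: sum.cong)
next
  fix l assume "l < kh"
  then show "(\<Sum>i<n. (U i - proj_ucol kh U i) * (X i \<bullet> V l)) = 0"
    using normal_eq_iff_dotn_ucol[OF kr] dotn_ucol_proj_ucol[OF kr] by (simp add: dotn_commute)
qed (simp add: proj_ucol_def)

lemma is_lsq_unique:
  assumes kr: "kh \<le> r" and p: "is_lsq kh U p"
  shows "p = proj_ucol kh U"
proof -
  obtain c where c: "\<forall>i<n. p i = (\<Sum>j<kh. c j * (X i \<bullet> V j))"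
    using p by (auto simp: is_lsq_def)
  define d where "d i = p i - proj_ucol kh U i" for i
  define c' where "c' j = c j * sqrt (real n * lam j) - dotn n U (ucol j)" for j
  have d_span: "d i = (\<Sum>j<kh. c' j * ucol j i)" if "i < n" for i
  proof -
    have "p i = (\<Sum>j<kh. c j * sqrt (real n * lam j) * ucol j i)"
      using c that col_eq_ucol kr by (auto intro!: sum.cong simp: col_def)
    then show ?thesis unfolding d_def proj_ucol_def c'_def using that
      by (simp add: sum_subtractf[symmetric] left_diff_distrib)
  qed
  have d_orth: "dotn n d (ucol l) = 0" if "l < kh" for l
  proof -
    have "dotn n U (ucol l) = dotn n p (ucol l)"
      using p that normal_eq_iff_dotn_ucol[OF kr that] by (auto simp: is_lsq_def)
    then show ?thesis
      unfolding d_def using dotn_ucol_proj_ucol[OF kr that] by (simp add: dotn_diff_left dotn_commute)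
  qed
  have "dotn n d d = dotn n (\<lambda>i. \<Sum>j<kh. c' j * ucol j i) d"
    by (rule dotn_cong) (use d_span in auto)
  also have "\<dots> = 0"
    using d_orth by (simp add: dotn_sum_left dotn_scale_left dotn_commute[of n "ucol _"])
  finally have "dotn n d d = 0" .
  then show ?thesis
    using p by (auto simp: fun_eq_iff d_def proj_ucol_def is_lsq_def dest: dotn_self_eq_0D)
qed

lemma proj_eq_proj_ucol: "kh \<le> r \<Longrightarrow> proj n X V kh U = proj_ucol kh U"
  unfolding proj_def is_lsq_def[symmetric]
  by (rule the_equality) (auto intro: is_lsq_proj_ucol is_lsq_unique)

lemma phi_eq_proj_energy:
  assumes kr: "kh \<le> r"
  shows "phi n X V kh U = (proj_energy kh U / real n) / (((dotn n U U - proj_energy kh U) / real n) / real (n - kh))"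
proof -
  have PP: "dotn n (proj_ucol kh U) (proj_ucol kh U) = proj_energy kh U"
    unfolding dotn_proj_ucol_left proj_energy_def
    by (rule sum.cong) (use dotn_ucol_proj_ucol[OF kr] in \<open>auto simp: power2_eq_square\<close>)
  have UP: "dotn n U (proj_ucol kh U) = proj_energy kh U"
    unfolding dotn_commute[of n U] dotn_proj_ucol_left proj_energy_def
    by (rule sum.cong) (auto simp: power2_eq_square dotn_commute)
  have "dotn n (\<lambda>i. U i - proj_ucol kh U i) (\<lambda>i. U i - proj_ucol kh U i)
      = dotn n U U - dotn n U (proj_ucol kh U) - (dotn n (proj_ucol kh U) U - dotn n (proj_ucol kh U) (proj_ucol kh U))"
    by (simp only: dotn_diff_left dotn_diff_right)
  also have "\<dots> = dotn n U U - proj_energy kh U"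
    using PP UP dotn_commute[of n "proj_ucol kh U" U] by simp
  finally show ?thesis
    unfolding phi_def proj_eq_proj_ucol[OF kr] normn_sq PP by simp
qed

text \<open>When the residual vanishes both sides are \<open>0\<close>, by the convention \<open>x / 0 = 0\<close>.\<close>

lemma phi_div_eq_fisher_ratio:
  assumes kr: "kh \<le> r" and k1: "1 \<le> kh" and kn: "kh < n"
    and T_coef: "\<And>j. j < kh \<Longrightarrow> T j = dotn n (ucol j) z"
    and T_norm: "dotn n T T = dotn n z z"
  shows "phi n X V kh z / real kh = fisher_ratio kh (n - kh) T"
proof -
  define P where "P = proj_energy kh z"
  define Q where "Q = dotn n z z - proj_energy kh z"
  have num: "(\<Sum>j<kh. (T j)\<^sup>2) = P"
    unfolding P_def proj_energy_def by (rule sum.cong) (auto simp: T_coef dotn_commute)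
  have "{..<n} = {..<kh} \<union> {kh..<kh + (n - kh)}" "{..<kh} \<inter> {kh..<kh + (n - kh)} = {}"
    using kn by auto
  then have "dotn n T T = (\<Sum>j<kh. (T j)\<^sup>2) + (\<Sum>j\<in>{kh..<kh + (n - kh)}. (T j)\<^sup>2)"
    unfolding dotn_def power2_eq_square by (simp add: sum.union_disjoint)
  then have den: "(\<Sum>j\<in>{kh..<kh + (n - kh)}. (T j)\<^sup>2) = Q"
    using T_norm num by (simp add: Q_def P_def)
  have lhs: "phi n X V kh z / real kh = ((P / real n) / ((Q / real n) / real (n - kh))) / real kh"
    unfolding phi_eq_proj_energy[OF kr] P_def Q_def ..
  have rhs: "fisher_ratio kh (n - kh) T = (P / real kh) / (Q / real (n - kh))"
    unfolding fisher_ratio_def num den ..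
  show ?thesis
    unfolding lhs rhs using kn n_pos k1 by (cases "Q = 0") (simp_all add: field_simps)
qed


lemma prob_fisher_tail_phi_le:
  assumes k1: "1 \<le> kh" and kr: "kh \<le> r" and kn: "kh < n" and t: "0 \<le> t"
  shows "{z \<in> space (gauss n). fisher_tail kh (n - kh) (phi n X V kh z / real kh) \<le> t} \<in> sets (gauss n)"
    and "measure (gauss n) {z \<in> space (gauss n). fisher_tail kh (n - kh) (phi n X V kh z / real kh) \<le> t} \<le> t"
proof -
  have nn: "kh + (n - kh) = n" using kn by simp
  obtain T where T: "gauss_isometry n 0 T" and T_coef: "\<forall>z\<in>space (gauss n). \<forall>j<kh. T z j = dotn n (ucol j) z"
    using gauss_isometry_onto_coords[of kh n ucol] kn kr ucol_space dotn_ucol by fastforce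
  have Tm: "T \<in> gauss n \<rightarrow>\<^sub>M gauss n" and T_distr: "distr (gauss n) (gauss n) T = gauss n"
    using T by (auto simp: gauss_isometry_def)
  define B where "B = {y \<in> space (gauss n). fisher_tail kh (n - kh) (fisher_ratio kh (n - kh) y) \<le> t}"
  have B: "B \<in> sets (gauss n)"
    using measurable_comp[OF measurable_fisher_ratio[of kh "n - kh", unfolded nn] measurable_fisher_tail]
    unfolding B_def by (simp add: comp_def)
  have "phi n X V kh z / real kh = fisher_ratio kh (n - kh) (T z)" if "z \<in> space (gauss n)" for z
    using that T_coef gauss_isometry_dotn[OF T] gauss_isometry_space[OF T]
    by (intro phi_div_eq_fisher_ratio[OF kr k1 kn]) auto
  then have eq: "{z \<in> space (gauss n). fisher_tail kh (n - kh) (phi n X V kh z / real kh) \<le> t}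
      = T -` B \<inter> space (gauss n)"
    using gauss_isometry_space[OF T] by (auto simp: B_def)
  show "{z \<in> space (gauss n). fisher_tail kh (n - kh) (phi n X V kh z / real kh) \<le> t} \<in> sets (gauss n)"
    unfolding eq by (rule measurable_sets[OF Tm B])
  have "measure (gauss n) (T -` B \<inter> space (gauss n)) = measure (gauss n) B"
    using measure_distr[OF Tm B] unfolding T_distr by simp
  also have "\<dots> \<le> t"
    using prob_fisher_tail_fisher_ratio_le[of kh "n - kh" t] k1 kn t unfolding B_def nn by simp
  finally show "measure (gauss n) {z \<in> space (gauss n). fisher_tail kh (n - kh) (phi n X V kh z / real kh) \<le> t} \<le> t"
    unfolding eq .
qed

lemma prob_INF_fisher_tail_phi_le:
  assumes K: "finite K" "K \<noteq> {}" and K_range: "\<And>k. k \<in> K \<Longrightarrow> 1 \<le> min k r \<and> min k r < n"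
    and t: "0 \<le> t"
  shows "measure (gauss n) {z \<in> space (gauss n). (INF k\<in>K. fisher_tail (min k r) (n - min k r)
           (phi n X V (min k r) z / real (min k r))) \<le> t} \<le> real (card K) * t"
proof -
  interpret prob_space "gauss n" by (rule prob_space_gauss)
  define S where "S k = {z \<in> space (gauss n). fisher_tail (min k r) (n - min k r)
      (phi n X V (min k r) z / real (min k r)) \<le> t}" for k
  have S: "S k \<in> sets (gauss n)" "measure (gauss n) (S k) \<le> t" if "k \<in> K" for k
    unfolding S_def using prob_fisher_tail_phi_le[of "min k r" t] K_range[OF that] t by auto
  have "{z \<in> space (gauss n). (INF k\<in>K. fisher_tail (min k r) (n - min k r)
      (phi n X V (min k r) z / real (min k r))) \<le> t} \<subseteq> (\<Union>k\<in>K. S k)"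
  proof
    fix z assume z: "z \<in> {z \<in> space (gauss n). (INF k\<in>K. fisher_tail (min k r) (n - min k r)
      (phi n X V (min k r) z / real (min k r))) \<le> t}"
    have "(INF k\<in>K. fisher_tail (min k r) (n - min k r) (phi n X V (min k r) z / real (min k r)))
        \<in> (\<lambda>k. fisher_tail (min k r) (n - min k r) (phi n X V (min k r) z / real (min k r))) ` K"
      using K by (simp add: cInf_eq_Min)
    with z show "z \<in> (\<Union>k\<in>K. S k)" by (auto simp: S_def)
  qed
  then have "measure (gauss n) {z \<in> space (gauss n). (INF k\<in>K. fisher_tail (min k r) (n - min k r)
      (phi n X V (min k r) z / real (min k r))) \<le> t} \<le> measure (gauss n) (\<Union>k\<in>K. S k)"
    using S K by (intro finite_measure_mono) auto
  also have "\<dots> \<le> (\<Sum>k\<in>K. measure (gauss n) (S k))"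
    using S K by (intro finite_measure_subadditive_finite) auto
  also have "\<dots> \<le> real (card K) * t"
    using S sum_mono[of K "\<lambda>k. measure (gauss n) (S k)" "\<lambda>_. t"] by simp
  finally show ?thesis .
qed

lemma q_quant_ge:
  assumes K: "finite K" "K \<noteq> {}" and K_range: "\<And>k. k \<in> K \<Longrightarrow> 1 \<le> min k r \<and> min k r < n"
    and \<alpha>: "0 < \<alpha>" "\<alpha> \<le> 1"
  shows "\<alpha> / real (card K) \<le> q_quant n X r V K \<alpha>"
proof -
  interpret prob_space "gauss n" by (rule prob_space_gauss)
  define G where "G z = (INF k\<in>K. fisher_tail (min k r) (n - min k r) (phi n X V (min k r) z / real (min k r)))" for z
  define Q where "Q = {t. \<alpha> \<le> measure (gauss n) {z \<in> space (gauss n). G z \<le> t}}"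
  have "G z \<in> (\<lambda>k. fisher_tail (min k r) (n - min k r) (phi n X V (min k r) z / real (min k r))) ` K" for z
    unfolding G_def using K by (simp add: cInf_eq_Min)
  then have G_range: "0 \<le> G z" "G z \<le> 1" for z
    using fisher_tail_nonneg fisher_tail_le_1 by (metis (no_types, lifting) imageE)+
  have "{z \<in> space (gauss n). G z \<le> 1} = space (gauss n)" using G_range by auto
  then have "1 \<in> Q" using \<alpha> by (simp add: Q_def prob_space)
  moreover have "\<alpha> / real (card K) \<le> t" if "t \<in> Q" for t
  proof (rule ccontr)
    assume "\<not> \<alpha> / real (card K) \<le> t"
    then have t: "real (card K) * t < \<alpha>" using K by (simp add: field_simps card_gt_0_iff)
    have "measure (gauss n) {z \<in> space (gauss n). G z \<le> t} < \<alpha>"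
    proof (cases "0 \<le> t")
      case True
      then have "measure (gauss n) {z \<in> space (gauss n). G z \<le> t} \<le> real (card K) * t"
        using prob_INF_fisher_tail_phi_le[OF K K_range] by (simp add: G_def)
      with t show ?thesis by simp
    next
      case False
      then have "t < G z" for z using G_range(1)[of z] by linarith
      then have "{z \<in> space (gauss n). G z \<le> t} = {}" by (auto simp: not_le)
      with \<alpha> show ?thesis by (metis measure_empty)
    qed
    with that show False by (simp add: Q_def)

  qed
  ultimately show ?thesis
    unfolding q_quant_def G_def[symmetric] Q_def[symmetric] by (intro cInf_greatest) auto
qed

lemma measurable_phi:
  assumes kr: "kh \<le> r" and Y: "\<And>i. i < n \<Longrightarrow> (\<lambda>e. Y e i) \<in> borel_measurable M"
  shows "(\<lambda>e. phi n X V kh (Y e)) \<in> borel_measurable M"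
proof -
  have "(\<lambda>e. dotn n (Y e) g) \<in> borel_measurable M" "(\<lambda>e. dotn n (Y e) (Y e)) \<in> borel_measurable M" for g
    unfolding dotn_def using Y by auto
  then show ?thesis
    unfolding phi_eq_proj_energy[OF kr] proj_energy_def by measurable
qed

lemma measurable_test_stat:
  assumes Y: "\<And>i. i < n \<Longrightarrow> (\<lambda>e. Y e i) \<in> borel_measurable M"
  shows "(\<lambda>e. test_stat n X r V K a (Y e)) \<in> borel_measurable M"
  unfolding test_stat_def
  using measurable_phi[OF _ Y] by (intro borel_measurable_SUP) (auto simp: countable_finite)

lemma prob_test_stat_pos_mono:
  assumes M: "prob_space M" and Y: "\<And>i. i < n \<Longrightarrow> (\<lambda>e. Y e i) \<in> borel_measurable M"
    and K: "finite K" "K \<noteq> {}" and K_range: "\<And>k. k \<in> K \<Longrightarrow> 1 \<le> k \<and> k < n"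
    and \<alpha>: "0 < \<alpha>" "\<alpha> \<le> 1"
  shows "measure M {e \<in> space M. test_stat n X r V K (\<alpha> / real (card K)) (Y e) > 0}
       \<le> measure M {e \<in> space M. test_stat n X r V K (q_quant n X r V K \<alpha>) (Y e) > 0}"
proof -
  interpret prob_space M by (rule M)
  define T where "T a = {e \<in> space M. test_stat n X r V K a (Y e) > 0}" for a
  have T_sets: "T a \<in> events" for a
    unfolding T_def using measurable_test_stat[OF Y] by measurable
  show ?thesis
  proof (cases "r = 0")
    case True
    then have no_k: "{k \<in> K. k \<le> r} = {}" using K_range by fastforce
    have "T (\<alpha> / real (card K)) = {}" unfolding T_def test_stat_def no_k by simp
    then show ?thesis unfolding T_def[symmetric] by simp
  next
    case False
    with K_range \<alpha> have "\<alpha> / real (card K) \<le> q_quant n X r V K \<alpha>"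
      by (intro q_quant_ge[OF K]) fastforce+
    moreover have "0 < \<alpha> / real (card K)" using \<alpha> K by (simp add: card_gt_0_iff)
    ultimately have "T (\<alpha> / real (card K)) \<subseteq> T (q_quant n X r V K \<alpha>)"
      by (auto simp: T_def intro: test_stat_pos_mono_level)
    then show ?thesis unfolding T_def[symmetric] using T_sets by (intro finite_measure_mono)
  qed
qed

end


lemma dyadic_grid_bounds:
  assumes "k \<in> (\<lambda>j. 2 ^ j) ` {..m}" "2 * 2 ^ m \<le> (n::nat)"
  shows "1 \<le> k" "2 * k \<le> n"
proof -
  obtain j where j: "j \<le> m" "k = 2 ^ j" using assms(1) by auto
  have "(2::nat) ^ j \<le> 2 ^ m" using j(1) by (rule power_increasing) simp
  then show "2 * k \<le> n" using assms(2) j(2) by linarith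
  show "1 \<le> k" using j(2) by simp
qed

theorem proposition5p3:
  fixes X :: "nat \<Rightarrow> 'h::{real_inner, complete_space, second_countable_topology}"
    and \<theta> :: 'h and E :: "real measure" and \<sigma> \<alpha> :: real
    and n m r :: nat and lam :: "nat \<Rightarrow> real" and V :: "nat \<Rightarrow> 'h"
  assumes theta: "\<theta> \<noteq> 0"
    and noise: "prob_space E" "integrable E (\<lambda>x. x)" "integrable E (\<lambda>x. x\<^sup>2)"
      "(\<integral>x. x \<partial>E) = 0" "(\<integral>x. x\<^sup>2 \<partial>E) = \<sigma>\<^sup>2" "\<sigma>\<^sup>2 > 0"
    and alpha: "0 < \<alpha>" "\<alpha> < 1"
    and kbar: "2 * 2 ^ m \<le> n"
    and eig: "is_eigdec n X r lam V"
  shows "measure (PiM {..<n} (\<lambda>_. E))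
           {e \<in> space (PiM {..<n} (\<lambda>_. E)).
              test_stat n X r V ((\<lambda>j. 2 ^ j) ` {..m}) (q_quant n X r V ((\<lambda>j. 2 ^ j) ` {..m}) \<alpha>)
                 (\<lambda>i. X i \<bullet> \<theta> + e i) > 0}
         \<ge> measure (PiM {..<n} (\<lambda>_. E))
           {e \<in> space (PiM {..<n} (\<lambda>_. E)).
              test_stat n X r V ((\<lambda>j. 2 ^ j) ` {..m}) (\<alpha> / real (card ((\<lambda>j::nat. (2::nat) ^ j) ` {..m})))
                 (\<lambda>i. X i \<bullet> \<theta> + e i) > 0}"
proof -
  define K :: "nat set" where "K = (\<lambda>j. 2 ^ j) ` {..m}"
  have K_range: "1 \<le> k \<and> k < n" if "k \<in> K" for k
    using dyadic_grid_bounds[OF that[unfolded K_def] kbar] by linarith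
  have K: "finite K" "K \<noteq> {}" by (auto simp: K_def)
  then have "0 < n" using K_range by fastforce
  with eig interpret eig_design n X r lam V by unfold_locales
  have "(\<lambda>e. X i \<bullet> \<theta> + e i) \<in> borel_measurable (PiM {..<n} (\<lambda>_. E))" if "i < n" for i
    using measurable_comp[OF measurable_component_singleton[of i "{..<n}" "\<lambda>_. E"]
        borel_measurable_integrable[OF noise(2)]] that
    by (simp add: comp_def)
  with prob_space_PiM[OF noise(1)] K K_range alpha show ?thesis
    unfolding K_def[symmetric] by (intro prob_test_stat_pos_mono) auto
qed

end
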